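(* Let $\mathcal C$ be a Clifford circuit with linear outcome code $\mathcal O(\mathcal C)$. For every $u\in\mathcal O(\mathcal C)^\perp$, $\overleftarrow{F(u)}=\overrightarrow{F'(u)}$, where $F'(u)=\prod_{j=1}^m\eta_{\ell_j+0.5}(S_j^{u_j})$.
   Context: A Clifford circuit on $n$ qubits is a finite sequence of operations, each a unitary Clifford gate or the measurement of a Hermitian $n$-qubit Pauli, each with a level in $\{1,2,\dots\}$; operations of equal level have disjoint supports and levels are nondecreasing; depth $\Delta$ = maximal level. In circuit order the $j$-th measurement measures $S_j$ at level $\ell_j$ ($j=1,\dots,m$); outcome $o_j=0$ for eigenvalue $+1$, $1$ for $-1$. The outcome code $\mathcal O(\mathcal C)\subseteq\mathbb Z_2^m$ is the set of outcome bit-strings occurring with nonzero probability for some input state; $\perp$ refers to $(u|v)=\sum u_iv_i\bmod2$. $\overline{\mathcal P}_N$ is the $N$-qubit Pauli group modulo phases. $U_\ell$ is the product of unitary gates of level $\ell$ (identity if none). Fault operators $F\in\overline{\mathcal P}_{n(\Delta+1)}$ act on qubits $(\ell+0.5,q)$, $0\le\ell\le\Delta$, $1\le q\le n$, with level components $F_{\ell+0.5}$; $\eta_{\ell+0.5}(P)$ is $P$ at level $\ell+0.5$ and $I$ elsewhere. Cumulant $\overrightarrow F$: start with $F$; for $\ell=1,\dots,\Delta$ replace $\overrightarrow F_{\ell+0.5}$ by $\overrightarrow F_{\ell+0.5}\cdot U_\ell\overrightarrow F_{\ell-0.5}U_\ell^{-1}$. Back-cumulant $\overleftarrow F$: start with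 $F$; for $\ell=\Delta,\dots,1$ replace $\overleftarrow F_{\ell-0.5}$ by $\overleftarrow F_{\ell-0.5}\cdot U_\ell^{-1}\overleftarrow F_{\ell+0.5}U_\ell$. $F(u)=\prod_j\eta_{\ell_j-0.5}(S_j^{u_j})$. *)

theory Defs
  imports "Jordan_Normal_Form.Schur_Decomposition"
begin

text \<open>The n-qubit Hilbert space is C^(2^n); computational basis vector with index a < 2^n
  has qubit q (q < n) in state given by bit q of a.  Operators are complex (2^n) x (2^n) matrices.\<close>

abbreviation dimq :: "nat \<Rightarrow> nat" where "dimq n \<equiv> 2 ^ n"

text \<open>The Pauli operator X^x Z^z (x, z : qubit sets given as predicates):
  X^x Z^z |b> = (-1)^(z.b) |b xor x>.\<close>
definition pauli :: "nat \<Rightarrow> (nat \<Rightarrow> bool) \<Rightarrow> (nat \<Rightarrow> bool) \<Rightarrow> complex mat" where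
  "pauli n x z = mat (dimq n) (dimq n) (\<lambda>(a, b).
     if (\<forall>q<n. (bit a q \<noteq> bit b q) = x q)
     then (- 1) ^ card {q. q < n \<and> z q \<and> bit b q} else 0)"

definition is_pauli :: "nat \<Rightarrow> complex mat \<Rightarrow> bool" where
  "is_pauli n P \<longleftrightarrow> (\<exists>k::nat. \<exists>x z. P = (\<i> ^ k) \<cdot>\<^sub>m pauli n x z)"

definition is_hermitian_pauli :: "nat \<Rightarrow> complex mat \<Rightarrow> bool" where
  "is_hermitian_pauli n P \<longleftrightarrow> is_pauli n P \<and> mat_adjoint P = P"

definition eq_mod_phase :: "complex mat \<Rightarrow> complex mat \<Rightarrow> bool" where
  "eq_mod_phase A B \<longleftrightarrow> (\<exists>k::nat. A = (\<i> ^ k) \<cdot>\<^sub>m B)"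

definition is_unitary :: "nat \<Rightarrow> complex mat \<Rightarrow> bool" where
  "is_unitary n U \<longleftrightarrow> U \<in> carrier_mat (dimq n) (dimq n) \<and> U * mat_adjoint U = 1\<^sub>m (dimq n)
     \<and> mat_adjoint U * U = 1\<^sub>m (dimq n)"

definition is_clifford :: "nat \<Rightarrow> complex mat \<Rightarrow> bool" where
  "is_clifford n U \<longleftrightarrow> is_unitary n U \<and>
     (\<forall>P. is_pauli n P \<longrightarrow> is_pauli n (U * P * mat_adjoint U))"

text \<open>An operator acts trivially outside the qubit set Q: it commutes with every Pauli
  supported outside Q (equivalently, it is of the form V (x) I on Q and its complement).\<close>
definition acts_within :: "nat \<Rightarrow> nat set \<Rightarrow> complex mat \<Rightarrow> bool" where
  "acts_within n Q U \<longleftrightarrow> (\<forall>x z. (\<forall>q\<in>Q. \<not> x q \<and> \<not> z q) \<longrightarrow> U * pauli n x z = pauli n x z * U)"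

definition pauli_support :: "nat \<Rightarrow> complex mat \<Rightarrow> nat set" where
  "pauli_support n P = {q. q < n \<and> (\<exists>k::nat. \<exists>x z. P = (\<i> ^ k) \<cdot>\<^sub>m pauli n x z \<and> (x q \<or> z q))}"

datatype operation = Gate "nat set" "complex mat" | Meas "complex mat"

type_synonym circuit = "(operation \<times> nat) list"

fun op_support :: "nat \<Rightarrow> operation \<Rightarrow> nat set" where
  "op_support n (Gate Q U) = Q"
| "op_support n (Meas S) = pauli_support n S"

fun op_wf :: "nat \<Rightarrow> operation \<Rightarrow> bool" where
  "op_wf n (Gate Q U) \<longleftrightarrow> Q \<subseteq> {..<n} \<and> is_clifford n U \<and> acts_within n Q U"
| "op_wf n (Meas S) \<longleftrightarrow> is_hermitian_pauli n S"

definition clifford_circuit :: "nat \<Rightarrow> circuit \<Rightarrow> bool" where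
  "clifford_circuit n C \<longleftrightarrow>
     (\<forall>(op, l) \<in> set C. op_wf n op \<and> 1 \<le> l) \<and>
     sorted (map snd C) \<and>
     (\<forall>i<length C. \<forall>j<length C. i \<noteq> j \<longrightarrow> snd (C ! i) = snd (C ! j) \<longrightarrow>
        op_support n (fst (C ! i)) \<inter> op_support n (fst (C ! j)) = {})"

definition depth :: "circuit \<Rightarrow> nat" where
  "depth C = Max (insert 0 (set (map snd C)))"

fun meas_list :: "circuit \<Rightarrow> (complex mat \<times> nat) list" where
  "meas_list [] = []"
| "meas_list ((Gate Q U, l) # C) = meas_list C"
| "meas_list ((Meas S, l) # C) = (S, l) # meas_list C"

definition num_meas :: "circuit \<Rightarrow> nat" where
  "num_meas C = length (meas_list C)"

definition meas_proj :: "nat \<Rightarrow> complex mat \<Rightarrow> bool \<Rightarrow> complex mat" where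
  "meas_proj n S b = (1 / 2 :: complex) \<cdot>\<^sub>m (1\<^sub>m (dimq n) + (if b then - S else S))"

fun run :: "nat \<Rightarrow> circuit \<Rightarrow> bool list \<Rightarrow> complex vec \<Rightarrow> complex vec" where
  "run n [] os v = v"
| "run n ((Gate Q U, l) # C) os v = run n C os (U *\<^sub>v v)"
| "run n ((Meas S, l) # C) [] v = run n C [] (meas_proj n S False *\<^sub>v v)"
| "run n ((Meas S, l) # C) (b # os) v = run n C os (meas_proj n S b *\<^sub>v v)"

text \<open>Outcome code: outcome bit-strings (o_j = True meaning eigenvalue -1) of length m
  that occur with nonzero probability for some (normalised pure) input state.\<close>
definition outcome_code :: "nat \<Rightarrow> circuit \<Rightarrow> bool list set" where
  "outcome_code n C = {os. length os = num_meas C \<and>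
     (\<exists>\<psi> \<in> carrier_vec (dimq n). \<psi> \<bullet>c \<psi> = 1 \<and> run n C os \<psi> \<bullet>c run n C os \<psi> \<noteq> 0)}"

definition bxor :: "bool list \<Rightarrow> bool list \<Rightarrow> bool list" where
  "bxor xs ys = map2 (\<noteq>) xs ys"

definition bdot :: "bool list \<Rightarrow> bool list \<Rightarrow> bool" where
  "bdot u v = odd (card {j. j < length u \<and> j < length v \<and> u ! j \<and> v ! j})"

definition linear_code :: "nat \<Rightarrow> bool list set \<Rightarrow> bool" where
  "linear_code m Cd \<longleftrightarrow> Cd \<subseteq> {xs. length xs = m} \<and> replicate m False \<in> Cd \<and>
     (\<forall>a\<in>Cd. \<forall>b\<in>Cd. bxor a b \<in> Cd)"

definition dual_code :: "nat \<Rightarrow> bool list set \<Rightarrow> bool list set" where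
  "dual_code m Cd = {u. length u = m \<and> (\<forall>v\<in>Cd. \<not> bdot u v)}"

text \<open>A fault operator is a function F :: nat => complex mat; F l is the n-qubit Pauli at
  level l + 0.5 (l = 0..depth), each component taken modulo phase.\<close>

definition mprod :: "nat \<Rightarrow> complex mat list \<Rightarrow> complex mat" where
  "mprod n As = foldr (*) As (1\<^sub>m (dimq n))"

fun level_unitary :: "nat \<Rightarrow> circuit \<Rightarrow> nat \<Rightarrow> complex mat" where
  "level_unitary n [] l = 1\<^sub>m (dimq n)"
| "level_unitary n ((Gate Q U, l') # C) l =
     (if l' = l then level_unitary n C l * U else level_unitary n C l)"
| "level_unitary n ((Meas S, l') # C) l = level_unitary n C l"

fun cumulant :: "nat \<Rightarrow> circuit \<Rightarrow> (nat \<Rightarrow> complex mat) \<Rightarrow> nat \<Rightarrow> complex mat" where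
  "cumulant n C F 0 = F 0"
| "cumulant n C F (Suc l) =
     F (Suc l) * (level_unitary n C (Suc l) * cumulant n C F l * mat_adjoint (level_unitary n C (Suc l)))"

function back_cumulant :: "nat \<Rightarrow> circuit \<Rightarrow> (nat \<Rightarrow> complex mat) \<Rightarrow> nat \<Rightarrow> complex mat" where
  "back_cumulant n C F l =
     (if depth C \<le> l then F l
      else F l * (mat_adjoint (level_unitary n C (Suc l)) * back_cumulant n C F (Suc l)
                  * level_unitary n C (Suc l)))"
  by pat_completeness auto
termination by (relation "measure (\<lambda>(n, C, F, l). depth C - l)") auto

text \<open>F(u) = prod_j eta_{l_j - 0.5}(S_j^{u_j}): component l collects j with l_j - 0.5 = l + 0.5.\<close>
definition fault_before :: "nat \<Rightarrow> circuit \<Rightarrow> bool list \<Rightarrow> nat \<Rightarrow> complex mat" where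
  "fault_before n C u l = (let M = meas_list C in
     mprod n [if u ! j then fst (M ! j) else 1\<^sub>m (dimq n). j \<leftarrow> [0..<length M], snd (M ! j) = Suc l])"

text \<open>F'(u) = prod_j eta_{l_j + 0.5}(S_j^{u_j}): component l collects j with l_j = l.\<close>
definition fault_after :: "nat \<Rightarrow> circuit \<Rightarrow> bool list \<Rightarrow> nat \<Rightarrow> complex mat" where
  "fault_after n C u l = (let M = meas_list C in
     mprod n [if u ! j then fst (M ! j) else 1\<^sub>m (dimq n). j \<leftarrow> [0..<length M], snd (M ! j) = l])"

end

theory Submission
  imports Defs
begin

text \<open>A Pauli operator is determined up to phase by whether it commutes or anticommutes with
  each Pauli E, so it suffices to show that E has the same commutation sign with both cumulants.
  Pull E at level l back through the gates to an input error X. The sign of E against the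
  cumulant is the product, over the measurements j up to level l, of the signs of X (carried
  by the gates to just before level l_j) against S_j^(u_j); the sign against the back-cumulant
  is the same product over the measurements after level l. Together they give (-1)^(u|f),
  where f records which outcomes X flips. Applying X to an input state producing the all-zero
  outcome yields a state producing f, so f is an outcome codeword and (u|f) = 0.\<close>

abbreviation opmat :: "nat \<Rightarrow> complex mat set" where
  "opmat n \<equiv> carrier_mat (dimq n) (dimq n)"

lemma prod_if_neg_one:
  assumes "finite A"
  shows "(\<Prod>x\<in>A. if P x then - 1 else 1) = (- 1 :: 'a :: comm_ring_1) ^ card {x \<in> A. P x}"
proof -
  have "(\<Prod>x\<in>A. if P x then - 1 else (1 :: 'a)) = (\<Prod>x\<in>A \<inter> {x. P x}. - 1) * (\<Prod>x\<in>A \<inter> - {x. P x}. 1)"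
    by (rule prod.If_cases) (rule assms)
  also have "A \<inter> {x. P x} = {x \<in> A. P x}" by auto
  finally show ?thesis by simp
qed

lemma prod_group_levels:
  fixes m :: nat
  assumes K: "finite K"
  shows "(\<Prod>k\<in>K. \<Prod>j | j < m \<and> g j = k. h j) = (\<Prod>j | j < m \<and> g j \<in> K. (h j :: 'a :: comm_monoid_mult))"
proof -
  have "(\<Prod>k\<in>K. \<Prod>j \<in> {j \<in> {j. j < m \<and> g j \<in> K}. g j = k}. h j) = (\<Prod>j | j < m \<and> g j \<in> K. h j)"
  proof (rule prod.group)
    show "finite {j. j < m \<and> g j \<in> K}" by (rule finite_subset[of _ "{..<m}"]) auto
  qed (use K in auto)
  moreover have "{j \<in> {j. j < m \<and> g j \<in> K}. g j = k} = {j. j < m \<and> g j = k}" if "k \<in> K" for k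
    using that by auto
  ultimately show ?thesis by simp
qed

lemma listcomp_eq_map_filter: "[f j. j \<leftarrow> xs, P j] = map f (filter P xs)"
  by (induction xs) auto

lemma nat_eq_if_low_bits_eq:
  fixes a b :: nat
  assumes "a < 2 ^ n" "b < 2 ^ n" "\<forall>q<n. bit a q = bit b q"
  shows "a = b"
proof (rule bit_eqI)
  fix q
  have "\<not> bit a q \<and> \<not> bit b q" if "\<not> q < n"
    using that assms(1,2) by (metis bit_take_bit_iff take_bit_nat_eq_self)
  then show "bit a q = bit b q" using assms(3) by blast
qed

lemma bxor_Cons [simp]: "bxor (a # as) (b # bs) = (a \<noteq> b) # bxor as bs"
  unfolding bxor_def by simp

lemma bxor_replicate_False: "bxor (replicate (length f) False) f = f"
  unfolding bxor_def by (induction f) auto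

lemma smult_smult_mat: "a \<cdot>\<^sub>m (b \<cdot>\<^sub>m A) = (a * b :: 'a :: semigroup_mult) \<cdot>\<^sub>m A"
  by (rule eq_matI) (auto simp: mult.assoc)

lemma one_smult_mat [simp]: "(1 :: 'a :: monoid_mult) \<cdot>\<^sub>m A = A"
  by (rule eq_matI) auto

lemma smult_mult_smult:
  assumes "A \<in> carrier_mat nr n" "B \<in> carrier_mat n nc"
  shows "(a \<cdot>\<^sub>m A) * (b \<cdot>\<^sub>m B) = (a * b :: 'a :: comm_semiring_0) \<cdot>\<^sub>m (A * B)"
proof -
  have "(a \<cdot>\<^sub>m A) * (b \<cdot>\<^sub>m B) = a \<cdot>\<^sub>m (A * (b \<cdot>\<^sub>m B))"
    using assms by (intro mult_smult_assoc_mat) auto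
  also have "\<dots> = (a * b) \<cdot>\<^sub>m (A * B)"
    using mult_smult_distrib[OF assms] by (simp add: smult_smult_mat)
  finally show ?thesis .
qed

lemma assoc_mult_square_mat:
  "A \<in> carrier_mat N N \<Longrightarrow> B \<in> carrier_mat N N \<Longrightarrow> C \<in> carrier_mat N N \<Longrightarrow> A * B * C = A * (B * C)"
  by (rule assoc_mult_mat) auto

lemma commute_mult:
  assumes A: "A \<in> carrier_mat N N" and B: "B \<in> carrier_mat N N" and S: "S \<in> carrier_mat N N"
    and AS: "A * S = S * A" and BS: "B * S = S * B"
  shows "A * B * S = S * (A * B)"
proof -
  have "A * B * S = A * (S * B)" using A B S BS by (simp add: assoc_mult_square_mat)
  also have "\<dots> = (A * S) * B" using A B S by (simp add: assoc_mult_square_mat)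
  also have "\<dots> = S * (A * B)" using A B S AS by (simp add: assoc_mult_square_mat)
  finally show ?thesis .
qed

lemma minus_one_smult_eq_self:
  assumes "X \<in> carrier_mat nr nc" "(-1 :: complex) \<cdot>\<^sub>m X = X"
  shows "X = 0\<^sub>m nr nc"
proof (rule eq_matI)
  fix i j assume "i < dim_row (0\<^sub>m nr nc)" "j < dim_col (0\<^sub>m nr nc :: complex mat)"
  moreover have "((-1 :: complex) \<cdot>\<^sub>m X) $$ (i, j) = X $$ (i, j)" using assms(2) by simp
  ultimately show "X $$ (i, j) = 0\<^sub>m nr nc $$ (i, j)" using assms(1) by simp
qed (use assms in auto)

lemma smult_mat_mult_vec:
  assumes "A \<in> carrier_mat nr nc" "v \<in> carrier_vec nc"
  shows "(a \<cdot>\<^sub>m A) *\<^sub>v v = (a :: 'a :: comm_ring) \<cdot>\<^sub>v (A *\<^sub>v v)"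
proof (rule eq_vecI)
  fix i assume "i < dim_vec (a \<cdot>\<^sub>v (A *\<^sub>v v))"
  moreover have "dim_vec (row A i) = dim_vec v" using assms by simp
  ultimately show "((a \<cdot>\<^sub>m A) *\<^sub>v v) $ i = (a \<cdot>\<^sub>v (A *\<^sub>v v)) $ i" using assms by simp
qed (use assms in simp)

lemma mult_mat_vec_eq_if_mult_eq:
  assumes "A \<in> carrier_mat N N" "B \<in> carrier_mat N N" "A' \<in> carrier_mat N N" "B' \<in> carrier_mat N N"
    and "v \<in> carrier_vec N" "A * B = A' * B'"
  shows "A *\<^sub>v (B *\<^sub>v v) = A' *\<^sub>v (B' *\<^sub>v v)"
proof -
  have "A *\<^sub>v (B *\<^sub>v v) = (A * B) *\<^sub>v v" using assms(1,2,5) by simp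
  also have "\<dots> = A' *\<^sub>v (B' *\<^sub>v v)" unfolding assms(6) using assms(3-5) by simp
  finally show ?thesis .
qed

lemma exists_normalized_multiple:
  fixes w :: "complex vec"
  assumes w: "w \<in> carrier_vec N" "w \<noteq> 0\<^sub>v N"
  shows "\<exists>c. c \<noteq> 0 \<and> (c \<cdot>\<^sub>v w) \<bullet>c (c \<cdot>\<^sub>v w) = 1"
proof -
  define t where "t = Re (w \<bullet>c w)"
  have t: "t > 0" "w \<bullet>c w = complex_of_real t"
    using conjugate_square_greater_0_vec[OF w(1)] w(2) unfolding t_def
    by (auto simp: less_complex_def complex_eq_iff)
  define c where "c = complex_of_real (1 / sqrt t)"
  have "(c \<cdot>\<^sub>v w) \<bullet>c (c \<cdot>\<^sub>v w) = c * cnj c * (w \<bullet>c w)"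
    using w(1) by (simp add: conjugate_smult_vec)
  also have "\<dots> = complex_of_real ((1 / sqrt t) * (1 / sqrt t) * t)"
    unfolding c_def t(2) complex_cnj_complex_of_real of_real_mult ..
  also have "(1 / sqrt t) * (1 / sqrt t) * t = 1" using t(1) by (simp add: field_simps)
  finally have "(c \<cdot>\<^sub>v w) \<bullet>c (c \<cdot>\<^sub>v w) = 1" by simp
  moreover have "c \<noteq> 0" unfolding c_def using t(1) by simp
  ultimately show ?thesis by blast
qed

lemma mat_adjoint_dim [simp]:
  "dim_row (mat_adjoint A) = dim_col A" "dim_col (mat_adjoint A) = dim_row A"
  unfolding mat_adjoint_def by simp_all

lemma mat_adjoint_carrier: "A \<in> carrier_mat nr nc \<Longrightarrow> mat_adjoint A \<in> carrier_mat nc nr"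
  unfolding carrier_mat_def by simp

lemma mat_adjoint_index:
  assumes "i < dim_col A" "j < dim_row A"
  shows "mat_adjoint A $$ (i, j) = cnj (A $$ (j, i))"
proof -
  have "mat_adjoint A $$ (i, j) = (map conjugate (cols A) ! i) $ j"
    unfolding mat_adjoint_def by (rule mat_of_rows_index) (use assms in simp_all)
  also have "\<dots> = cnj (A $$ (j, i))" using assms by simp
  finally show ?thesis .
qed

lemma mat_adjoint_mult:
  fixes A B :: "complex mat"
  assumes A: "A \<in> carrier_mat nr n" and B: "B \<in> carrier_mat n nc"
  shows "mat_adjoint (A * B) = mat_adjoint B * mat_adjoint A"
proof (rule eq_matI)
  fix i j assume "i < dim_row (mat_adjoint B * mat_adjoint A)" "j < dim_col (mat_adjoint B * mat_adjoint A)"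
  then have i: "i < nc" and j: "j < nr" using A B by auto
  have "mat_adjoint (A * B) $$ (i, j) = cnj (\<Sum>k = 0..<n. A $$ (j, k) * B $$ (k, i))"
    using A B i j by (simp add: mat_adjoint_index scalar_prod_def)
  also have "\<dots> = (\<Sum>k = 0..<n. mat_adjoint B $$ (i, k) * mat_adjoint A $$ (k, j))"
    unfolding cnj_sum using A B i j by (intro sum.cong) (auto simp: mat_adjoint_index)
  also have "\<dots> = (mat_adjoint B * mat_adjoint A) $$ (i, j)"
    using A B i j by (simp add: scalar_prod_def)
  finally show "mat_adjoint (A * B) $$ (i, j) = (mat_adjoint B * mat_adjoint A) $$ (i, j)" .
qed (use A B in auto)

lemma mat_adjoint_one [simp]: "mat_adjoint (1\<^sub>m N :: complex mat) = 1\<^sub>m N"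
  by (rule eq_matI) (auto simp: mat_adjoint_index)

abbreviation conj_mat :: "complex mat \<Rightarrow> complex mat \<Rightarrow> complex mat" where
  "conj_mat U A \<equiv> U * A * mat_adjoint U"

lemma conj_mult_distrib:
  fixes V W X Y :: "'a :: semiring_1 mat"
  assumes "V \<in> carrier_mat N N" "W \<in> carrier_mat N N" "X \<in> carrier_mat N N" "Y \<in> carrier_mat N N"
    and "V * W = 1\<^sub>m N"
  shows "W * (X * Y) * V = (W * X * V) * (W * Y * V)"
proof -
  have "(W * X * V) * (W * Y * V) = W * X * (V * W) * (Y * V)"
    using assms(1-4) by (simp add: assoc_mult_square_mat)
  also have "\<dots> = W * (X * Y) * V"
    using assms left_mult_one_mat[of "Y * V" N N] by (simp add: assoc_mult_square_mat)
  finally show ?thesis by simp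
qed

lemma conj_cancel:
  fixes V W A :: "'a :: semiring_1 mat"
  assumes "V \<in> carrier_mat N N" "W \<in> carrier_mat N N" "A \<in> carrier_mat N N" "W * V = 1\<^sub>m N"
  shows "W * (V * A * W) * V = A"
proof -
  have "W * (V * A * W) * V = (W * V) * A * (W * V)"
    using assms(1-3) by (simp add: assoc_mult_square_mat)
  then show ?thesis
    using assms(4) left_mult_one_mat[OF assms(3)] right_mult_one_mat[OF assms(3)] by simp
qed

lemma commute_conj_iff:
  fixes V W E A :: "complex mat"
  assumes V: "V \<in> carrier_mat N N" and W: "W \<in> carrier_mat N N"
    and VW: "V * W = 1\<^sub>m N" and WV: "W * V = 1\<^sub>m N"
    and E: "E \<in> carrier_mat N N" and A: "A \<in> carrier_mat N N"
  shows "E * (V * A * W) = (V * A * W) * E \<longleftrightarrow> (W * E * V) * A = A * (W * E * V)"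
proof -
  have M: "V * A * W \<in> carrier_mat N N" and E': "W * E * V \<in> carrier_mat N N"
    using V W A E by auto
  have "W * (E * (V * A * W)) * V = (W * E * V) * A"
       "W * ((V * A * W) * E) * V = A * (W * E * V)"
    by (simp_all only: conj_mult_distrib[OF V W _ _ VW] E M conj_cancel[OF V W A WV])
  moreover have "V * ((W * E * V) * A) * W = E * (V * A * W)"
       "V * (A * (W * E * V)) * W = (V * A * W) * E"
    by (simp_all only: conj_mult_distrib[OF W V _ _ WV] E' A conj_cancel[OF W V E VW])
  ultimately show ?thesis by metis
qed

lemma conj_mat_mult:
  assumes "U \<in> opmat n" "W \<in> opmat n" "X \<in> opmat n"
  shows "conj_mat (U * W) X = conj_mat U (conj_mat W X)"
proof -
  have "mat_adjoint U \<in> opmat n" "mat_adjoint W \<in> opmat n"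
    using assms by (simp_all add: mat_adjoint_carrier)
  then show ?thesis using assms by (simp add: mat_adjoint_mult[of _ "dimq n" "dimq n"] assoc_mult_square_mat)
qed

section \<open>Pauli operators\<close>

definition parity_sign :: "nat \<Rightarrow> (nat \<Rightarrow> bool) \<Rightarrow> complex" where
  "parity_sign n P = (-1) ^ card {q. q < n \<and> P q}"

lemma parity_sign_prod: "parity_sign n P = (\<Prod>q<n. if P q then -1 else 1)"
  unfolding parity_sign_def prod_if_neg_one[OF finite_lessThan] by simp

lemma parity_sign_mult: "parity_sign n P * parity_sign n Q = parity_sign n (\<lambda>q. P q \<noteq> Q q)"
  unfolding parity_sign_prod prod.distrib[symmetric] by (intro prod.cong) auto

lemma parity_sign_cong: "(\<And>q. q < n \<Longrightarrow> P q = Q q) \<Longrightarrow> parity_sign n P = parity_sign n Q"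
  unfolding parity_sign_prod by (intro prod.cong) auto

lemma parity_sign_False [simp]: "parity_sign n (\<lambda>_. False) = 1"
  unfolding parity_sign_def by simp

lemma parity_sign_singleton: "q < n \<Longrightarrow> parity_sign n (\<lambda>r. r = q) = -1"
proof -
  assume "q < n"
  then have "{r. r < n \<and> r = q} = {q}" by auto
  then show ?thesis unfolding parity_sign_def by simp
qed

lemma parity_sign_eq_i_power: "parity_sign n P = \<i> ^ (2 * card {q. q < n \<and> P q})"
  unfolding parity_sign_def by (simp add: power_mult)

text \<open>pauli n x z maps the basis vector with index b to a multiple of the one with index
  flip_bits n x b.\<close>
definition flip_bits :: "nat \<Rightarrow> (nat \<Rightarrow> bool) \<Rightarrow> nat \<Rightarrow> nat" where
  "flip_bits n x b = horner_sum of_bool 2 (map (\<lambda>q. bit b q \<noteq> x q) [0..<n])"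

lemma flip_bits_less: "flip_bits n x b < dimq n"
  unfolding flip_bits_def using horner_sum_bound[of "map (\<lambda>q. bit b q \<noteq> x q) [0..<n]"] by simp

lemma bit_flip_bits: "q < n \<Longrightarrow> bit (flip_bits n x b) q \<longleftrightarrow> bit b q \<noteq> x q"
  unfolding flip_bits_def by (simp add: bit_horner_sum_bit_iff possible_bit_def)

lemma flip_bits_flip_bits: "flip_bits n x (flip_bits n x' c) = flip_bits n (\<lambda>q. x q \<noteq> x' q) c"
  by (rule nat_eq_if_low_bits_eq[OF flip_bits_less flip_bits_less]) (auto simp: bit_flip_bits)

lemma flip_bits_False: "b < dimq n \<Longrightarrow> flip_bits n (\<lambda>_. False) b = b"
  by (rule nat_eq_if_low_bits_eq[OF flip_bits_less]) (auto simp: bit_flip_bits)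

lemma pauli_carrier [simp]: "pauli n x z \<in> opmat n"
  unfolding pauli_def by simp

lemma pauli_dim [simp]: "dim_row (pauli n x z) = dimq n" "dim_col (pauli n x z) = dimq n"
  unfolding pauli_def by simp_all

lemma pauli_index:
  assumes "a < dimq n" "b < dimq n"
  shows "pauli n x z $$ (a, b) =
    (if a = flip_bits n x b then parity_sign n (\<lambda>q. z q \<and> bit b q) else 0)"
proof -
  have "(\<forall>q<n. (bit a q \<noteq> bit b q) = x q) \<longleftrightarrow> a = flip_bits n x b"
    using nat_eq_if_low_bits_eq[OF assms(1) flip_bits_less] by (auto simp: bit_flip_bits)
  then show ?thesis using assms unfolding pauli_def parity_sign_def by simp
qed

lemma pauli_mult:
  "pauli n x z * pauli n x' z' =
   parity_sign n (\<lambda>q. z q \<and> x' q) \<cdot>\<^sub>m pauli n (\<lambda>q. x q \<noteq> x' q) (\<lambda>q. z q \<noteq> z' q)"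
proof (rule eq_matI)
  fix a c
  assume "a < dim_row (parity_sign n (\<lambda>q. z q \<and> x' q) \<cdot>\<^sub>m pauli n (\<lambda>q. x q \<noteq> x' q) (\<lambda>q. z q \<noteq> z' q))"
    and "c < dim_col (parity_sign n (\<lambda>q. z q \<and> x' q) \<cdot>\<^sub>m pauli n (\<lambda>q. x q \<noteq> x' q) (\<lambda>q. z q \<noteq> z' q))"
  then have a: "a < dimq n" and c: "c < dimq n" by simp_all
  define b where "b = flip_bits n x' c"
  have b: "b < dimq n" and bit_b: "\<And>q. q < n \<Longrightarrow> bit b q \<longleftrightarrow> bit c q \<noteq> x' q"
    unfolding b_def by (simp_all add: flip_bits_less bit_flip_bits)
  have "(pauli n x z * pauli n x' z') $$ (a, c) =
      (\<Sum>b'\<in>{0..<dimq n}. pauli n x z $$ (a, b') * pauli n x' z' $$ (b', c))"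
    using a c by (simp add: scalar_prod_def)
  also have "\<dots> = (\<Sum>b'\<in>{0..<dimq n}. if b' = b
      then pauli n x z $$ (a, b) * parity_sign n (\<lambda>q. z' q \<and> bit c q) else 0)"
    using c by (intro sum.cong) (auto simp: pauli_index b_def)
  also have "\<dots> = pauli n x z $$ (a, b) * parity_sign n (\<lambda>q. z' q \<and> bit c q)"
    using b by simp
  also have "\<dots> = (parity_sign n (\<lambda>q. z q \<and> x' q) \<cdot>\<^sub>m
      pauli n (\<lambda>q. x q \<noteq> x' q) (\<lambda>q. z q \<noteq> z' q)) $$ (a, c)"
  proof -
    have "parity_sign n (\<lambda>q. z q \<and> bit b q) * parity_sign n (\<lambda>q. z' q \<and> bit c q) =
        parity_sign n (\<lambda>q. z q \<and> x' q) * parity_sign n (\<lambda>q. (z q \<noteq> z' q) \<and> bit c q)"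
      unfolding parity_sign_mult by (rule parity_sign_cong) (auto simp: bit_b)
    then show ?thesis
      using a b c by (simp add: pauli_index b_def flip_bits_flip_bits)
  qed
  finally show "(pauli n x z * pauli n x' z') $$ (a, c) = \<dots>" .
qed simp_all

lemma pauli_False_False: "pauli n (\<lambda>_. False) (\<lambda>_. False) = 1\<^sub>m (dimq n)"
  by (rule eq_matI) (auto simp: pauli_index flip_bits_False)

lemma pauli_restrict: "pauli n x z = pauli n (\<lambda>q. q < n \<and> x q) (\<lambda>q. q < n \<and> z q)"
  unfolding pauli_def by (intro cong_mat refl) (auto intro!: arg_cong[where f="\<lambda>A. (-1::complex) ^ card A"])

lemma pauli_commutation:
  "pauli n x z * pauli n x' z' =
   parity_sign n (\<lambda>q. (z q \<and> x' q) \<noteq> (z' q \<and> x q)) \<cdot>\<^sub>m (pauli n x' z' * pauli n x z)"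
proof -
  have "pauli n (\<lambda>q. x' q \<noteq> x q) (\<lambda>q. z' q \<noteq> z q) = pauli n (\<lambda>q. x q \<noteq> x' q) (\<lambda>q. z q \<noteq> z' q)"
    by (rule arg_cong2[where f="pauli n"]) auto
  moreover have "parity_sign n (\<lambda>q. (z q \<and> x' q) \<noteq> (z' q \<and> x q)) * parity_sign n (\<lambda>q. z' q \<and> x q)
      = parity_sign n (\<lambda>q. z q \<and> x' q)"
    unfolding parity_sign_mult by (rule parity_sign_cong) auto
  ultimately show ?thesis
    unfolding pauli_mult smult_smult_mat by simp
qed

lemma is_pauli_carrier: "is_pauli n P \<Longrightarrow> P \<in> opmat n"
  unfolding is_pauli_def by auto

lemma is_pauli_pauli: "is_pauli n (pauli n x z)"
  unfolding is_pauli_def by (rule exI[of _ 0]) auto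

lemma is_pauli_one: "is_pauli n (1\<^sub>m (dimq n))"
  using is_pauli_pauli[of n "\<lambda>_. False" "\<lambda>_. False"] by (simp add: pauli_False_False)

lemma is_pauli_mult:
  assumes "is_pauli n A" "is_pauli n B"
  shows "is_pauli n (A * B)"
proof -
  obtain k x z k' x' z' where A: "A = (\<i> ^ k) \<cdot>\<^sub>m pauli n x z" and B: "B = (\<i> ^ k') \<cdot>\<^sub>m pauli n x' z'"
    using assms unfolding is_pauli_def by blast
  have "A * B = (\<i> ^ (k + k' + 2 * card {q. q < n \<and> z q \<and> x' q})) \<cdot>\<^sub>m
      pauli n (\<lambda>q. x q \<noteq> x' q) (\<lambda>q. z q \<noteq> z' q)"
    unfolding A B smult_mult_smult[OF pauli_carrier pauli_carrier] pauli_mult smult_smult_mat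
      parity_sign_eq_i_power by (simp add: power_add)
  then show ?thesis unfolding is_pauli_def by blast
qed

lemma is_pauli_square: "is_pauli n P \<Longrightarrow> \<exists>k. P * P = (\<i> ^ k) \<cdot>\<^sub>m 1\<^sub>m (dimq n)"
proof -
  assume "is_pauli n P"
  then obtain k x z where P: "P = (\<i> ^ k) \<cdot>\<^sub>m pauli n x z" unfolding is_pauli_def by blast
  have "P * P = (\<i> ^ k * \<i> ^ k * \<i> ^ (2 * card {q. q < n \<and> z q \<and> x q})) \<cdot>\<^sub>m 1\<^sub>m (dimq n)"
    unfolding P smult_mult_smult[OF pauli_carrier pauli_carrier] pauli_mult smult_smult_mat
      parity_sign_eq_i_power by (simp add: pauli_False_False)
  also have "\<i> ^ k * \<i> ^ k * \<i> ^ (2 * card {q. q < n \<and> z q \<and> x q}) =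
      \<i> ^ (k + k + 2 * card {q. q < n \<and> z q \<and> x q})" by (simp only: power_add)
  finally show ?thesis by blast
qed

lemma is_pauli_nonzero: "is_pauli n P \<Longrightarrow> P \<noteq> 0\<^sub>m (dimq n) (dimq n)"
proof
  assume "is_pauli n P" "P = 0\<^sub>m (dimq n) (dimq n)"
  moreover obtain k where "P * P = (\<i> ^ k) \<cdot>\<^sub>m 1\<^sub>m (dimq n)"
    using is_pauli_square[OF \<open>is_pauli n P\<close>] by blast
  ultimately have "((\<i> ^ k) \<cdot>\<^sub>m 1\<^sub>m (dimq n)) $$ (0, 0) = (0\<^sub>m (dimq n) (dimq n) :: complex mat) $$ (0, 0)"
    by simp
  then show False by simp
qed

lemma pauli_mult_vec_nonzero:
  assumes P: "is_pauli n P" and r: "r \<in> carrier_vec (dimq n)" "r \<noteq> 0\<^sub>v (dimq n)"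
  shows "P *\<^sub>v r \<noteq> 0\<^sub>v (dimq n)"
proof
  assume zero: "P *\<^sub>v r = 0\<^sub>v (dimq n)"
  obtain k where k: "P * P = (\<i> ^ k) \<cdot>\<^sub>m 1\<^sub>m (dimq n)" using is_pauli_square[OF P] by blast
  have cP: "P \<in> opmat n" using P by (rule is_pauli_carrier)
  have "(\<i> ^ k) \<cdot>\<^sub>v r = (P * P) *\<^sub>v r"
    unfolding k using r(1) by (simp add: smult_mat_mult_vec[OF one_carrier_mat])
  also have "\<dots> = 0\<^sub>v (dimq n)" using cP r(1) zero by auto
  finally have "(1 / \<i> ^ k) \<cdot>\<^sub>v ((\<i> ^ k) \<cdot>\<^sub>v r) = 0\<^sub>v (dimq n)" by auto
  then show False using r by (simp add: smult_smult_assoc)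
qed

lemma is_pauli_commute_or_anticommute:
  assumes "is_pauli n E" "is_pauli n A"
  shows "E * A = A * E \<or> E * A = (-1) \<cdot>\<^sub>m (A * E)"
proof -
  obtain k x z k' x' z' where E: "E = (\<i> ^ k) \<cdot>\<^sub>m pauli n x z" and A: "A = (\<i> ^ k') \<cdot>\<^sub>m pauli n x' z'"
    using assms unfolding is_pauli_def by blast
  define s where "s = parity_sign n (\<lambda>q. (z q \<and> x' q) \<noteq> (z' q \<and> x q))"
  have "E * A = (\<i> ^ k * \<i> ^ k') \<cdot>\<^sub>m (pauli n x z * pauli n x' z')"
    unfolding E A by (rule smult_mult_smult) auto
  also have "\<dots> = (\<i> ^ k * \<i> ^ k') \<cdot>\<^sub>m (s \<cdot>\<^sub>m (pauli n x' z' * pauli n x z))"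
    unfolding s_def by (subst pauli_commutation) (rule refl)
  also have "\<dots> = s \<cdot>\<^sub>m (A * E)"
    unfolding E A smult_mult_smult[OF pauli_carrier pauli_carrier] smult_smult_mat
    by (simp only: mult.commute mult.left_commute)
  finally have "E * A = s \<cdot>\<^sub>m (A * E)" .
  moreover have "s = 1 \<or> s = -1"
    unfolding s_def parity_sign_def by (metis neg_one_even_power neg_one_odd_power)
  ultimately show ?thesis by auto
qed

lemma is_pauli_not_commute_and_anticommute:
  assumes "is_pauli n E" "is_pauli n A" "E * A = A * E" "E * A = (-1) \<cdot>\<^sub>m (A * E)"
  shows False
proof -
  have AE: "is_pauli n (A * E)" using assms(1,2) by (rule is_pauli_mult[rotated])
  have "A * E = 0\<^sub>m (dimq n) (dimq n)"
    using minus_one_smult_eq_self[OF is_pauli_carrier[OF AE]] assms(3,4) by simp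
  then show False using is_pauli_nonzero[OF AE] by simp
qed

lemma pauli_anticommuting_witness:
  assumes "q < n" "x q \<or> z q"
  shows "\<exists>E. is_pauli n E \<and> E * pauli n x z = (-1) \<cdot>\<^sub>m (pauli n x z * E)"
proof -
  obtain x' z' where "parity_sign n (\<lambda>r. (z' r \<and> x r) \<noteq> (z r \<and> x' r)) = -1"
  proof (cases "x q")
    case True
    have "parity_sign n (\<lambda>r. (r = q \<and> x r) \<noteq> (z r \<and> False)) = parity_sign n (\<lambda>r. r = q)"
      by (rule parity_sign_cong) (use True in auto)
    then show ?thesis
      using parity_sign_singleton[OF assms(1)] by (intro that[where z'="\<lambda>r. r = q" and x'="\<lambda>_. False"]) simp
  next
    case False
    have "parity_sign n (\<lambda>r. (False \<and> x r) \<noteq> (z r \<and> r = q)) = parity_sign n (\<lambda>r. r = q)"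
      by (rule parity_sign_cong) (use False assms(2) in auto)
    then show ?thesis
      using parity_sign_singleton[OF assms(1)] by (intro that[where z'="\<lambda>_. False" and x'="\<lambda>r. r = q"]) simp
  qed
  then show ?thesis using is_pauli_pauli pauli_commutation[of n x' z' x z] by auto
qed

lemma central_pauli:
  assumes P: "is_pauli n P" and central: "\<And>E. is_pauli n E \<Longrightarrow> E * P = P * E"
  shows "\<exists>k. P = (\<i> ^ k) \<cdot>\<^sub>m 1\<^sub>m (dimq n)"
proof -
  obtain k x z where Pk: "P = (\<i> ^ k) \<cdot>\<^sub>m pauli n x z" using P unfolding is_pauli_def by blast
  have "\<not> (x q \<or> z q)" if q: "q < n" for q
  proof
    assume "x q \<or> z q"
    then obtain E where E: "is_pauli n E" and anti: "E * pauli n x z = (-1) \<cdot>\<^sub>m (pauli n x z * E)"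
      using pauli_anticommuting_witness[OF q] by blast
    have "E * P = (-1) \<cdot>\<^sub>m (P * E)"
      unfolding Pk using is_pauli_carrier[OF E] anti
      by (simp add: mult_smult_distrib[of _ "dimq n" "dimq n" _ "dimq n"] mult_smult_assoc_mat[of _ "dimq n" "dimq n" _ "dimq n"]
          smult_smult_mat mult.commute)
    then show False using is_pauli_not_commute_and_anticommute[OF E P central[OF E]] by blast
  qed
  then have "(\<lambda>q. q < n \<and> x q) = (\<lambda>_. False)" "(\<lambda>q. q < n \<and> z q) = (\<lambda>_. False)"
    by auto
  then have "pauli n x z = pauli n (\<lambda>_. False) (\<lambda>_. False)"
    by (metis pauli_restrict)
  then show ?thesis unfolding Pk pauli_False_False by auto
qed

lemma finite_paulis: "finite {P. is_pauli n P}"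
proof -
  define F where "F = (\<lambda>A q. q \<in> A) ` Pow {..<n}"
  have "{P. is_pauli n P} \<subseteq> (\<lambda>(k, x, z). (\<i> ^ k) \<cdot>\<^sub>m pauli n x z) ` ({..<4::nat} \<times> F \<times> F)"
  proof
    fix P assume "P \<in> {P. is_pauli n P}"
    then obtain k x z where P: "P = (\<i> ^ k) \<cdot>\<^sub>m pauli n x z" unfolding is_pauli_def by blast
    define x' where "x' = (\<lambda>q. q \<in> {q. q < n \<and> x q})"
    define z' where "z' = (\<lambda>q. q \<in> {q. q < n \<and> z q})"
    have "\<i> ^ k = \<i> ^ (4 * (k div 4) + k mod 4)" by simp
    also have "\<dots> = (\<i> ^ 4) ^ (k div 4) * \<i> ^ (k mod 4)" by (simp only: power_add power_mult)
    finally have "\<i> ^ k = \<i> ^ (k mod 4)" by simp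
    then have "P = (\<i> ^ (k mod 4)) \<cdot>\<^sub>m pauli n x' z'"
      unfolding P x'_def z'_def using pauli_restrict[of n x z] by simp
    moreover have "x' \<in> F" unfolding F_def x'_def by (rule image_eqI, rule refl, auto)
    moreover have "z' \<in> F" unfolding F_def z'_def by (rule image_eqI, rule refl, auto)
    ultimately show "P \<in> (\<lambda>(k, x, z). (\<i> ^ k) \<cdot>\<^sub>m pauli n x z) ` ({..<4} \<times> F \<times> F)"
      by (auto intro: image_eqI[where x="(k mod 4, x', z')"])
  qed
  moreover have "finite F" unfolding F_def by simp
  ultimately show ?thesis by (meson finite_SigmaI finite_imageI finite_lessThan finite_subset)
qed

section \<open>Commutation signs\<close>

definition comm_sign :: "complex mat \<Rightarrow> complex mat \<Rightarrow> int" where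
  "comm_sign E A = (if E * A = A * E then 1 else -1)"

lemma comm_sign_cases: "comm_sign E A = 1 \<or> comm_sign E A = -1"
  unfolding comm_sign_def by auto

lemma comm_sign_sym: "comm_sign A B = comm_sign B A"
  unfolding comm_sign_def by auto

lemma comm_sign_one: "E \<in> opmat n \<Longrightarrow> comm_sign E (1\<^sub>m (dimq n)) = 1"
  unfolding comm_sign_def by simp

lemma comm_sign_swap:
  assumes "is_pauli n E" "is_pauli n A"
  shows "E * A = of_int (comm_sign E A) \<cdot>\<^sub>m (A * E)"
  using is_pauli_commute_or_anticommute[OF assms] unfolding comm_sign_def by auto

lemma comm_sign_eqI:
  assumes E: "is_pauli n E" and A: "is_pauli n A" and s: "s = 1 \<or> s = -1"
    and swap: "E * A = of_int s \<cdot>\<^sub>m (A * E)"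
  shows "comm_sign E A = s"
  using s swap is_pauli_not_commute_and_anticommute[OF E A] unfolding comm_sign_def by auto

lemma comm_sign_mult:
  assumes E: "is_pauli n E" and A: "is_pauli n A" and B: "is_pauli n B"
  shows "comm_sign E (A * B) = comm_sign E A * comm_sign E B"
proof (rule comm_sign_eqI[OF E is_pauli_mult[OF A B]])
  show "comm_sign E A * comm_sign E B = 1 \<or> comm_sign E A * comm_sign E B = -1"
    using comm_sign_cases[of E A] comm_sign_cases[of E B] by auto
  have cE: "E \<in> opmat n" and cA: "A \<in> opmat n" and cB: "B \<in> opmat n"
    using E A B is_pauli_carrier by auto
  have "E * (A * B) = E * A * B" using cE cA cB by (simp add: assoc_mult_square_mat)
  also have "\<dots> = of_int (comm_sign E A) \<cdot>\<^sub>m (A * (E * B))"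
    using cE cA cB comm_sign_swap[OF E A]
    by (simp add: mult_smult_assoc_mat[of _ "dimq n" "dimq n" _ "dimq n"] assoc_mult_square_mat)
  also have "\<dots> = of_int (comm_sign E A * comm_sign E B) \<cdot>\<^sub>m (A * B * E)"
    using cE cA cB comm_sign_swap[OF E B]
    by (simp add: mult_smult_distrib[of _ "dimq n" "dimq n" _ "dimq n"] smult_smult_mat assoc_mult_square_mat)
  finally show "E * (A * B) = of_int (comm_sign E A * comm_sign E B) \<cdot>\<^sub>m (A * B * E)" .
qed

lemma is_pauli_mprod: "\<forall>A\<in>set As. is_pauli n A \<Longrightarrow> is_pauli n (mprod n As)"
  by (induction As) (auto simp: mprod_def is_pauli_one is_pauli_mult)

lemma comm_sign_mprod:
  "is_pauli n E \<Longrightarrow> \<forall>A\<in>set As. is_pauli n A \<Longrightarrow>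
    comm_sign E (mprod n As) = prod_list (map (comm_sign E) As)"
proof (induction As)
  case Nil
  then show ?case by (simp add: mprod_def comm_sign_one is_pauli_carrier)
next
  case (Cons A As)
  then show ?case
    using comm_sign_mult[OF _ _ is_pauli_mprod] by (simp add: mprod_def)
qed

lemma comm_sign_conj:
  assumes "V \<in> carrier_mat N N" "W \<in> carrier_mat N N" "V * W = 1\<^sub>m N" "W * V = 1\<^sub>m N"
    "E \<in> carrier_mat N N" "A \<in> carrier_mat N N"
  shows "comm_sign E (V * A * W) = comm_sign (W * E * V) A"
  unfolding comm_sign_def using commute_conj_iff[OF assms] by simp

text \<open>The product of two Paulis with the same commutation signs is central, hence a phase.\<close>
lemma eq_mod_phase_if_comm_signs_eq:
  assumes A: "is_pauli n A" and B: "is_pauli n B"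
    and signs: "\<And>E. is_pauli n E \<Longrightarrow> comm_sign E A = comm_sign E B"
  shows "eq_mod_phase A B"
proof -
  have AB: "is_pauli n (A * B)" using A B by (rule is_pauli_mult)
  obtain k where k: "A * B = (\<i> ^ k) \<cdot>\<^sub>m 1\<^sub>m (dimq n)"
  proof (rule exE[OF central_pauli[OF AB]])
    fix E assume E: "is_pauli n E"
    have "comm_sign E (A * B) = 1"
      using comm_sign_mult[OF E A B] signs[OF E] comm_sign_cases[of E B] by auto
    then show "E * (A * B) = A * B * E" unfolding comm_sign_def by (auto split: if_splits)
  qed
  obtain j where j: "B * B = (\<i> ^ j) \<cdot>\<^sub>m 1\<^sub>m (dimq n)" using is_pauli_square[OF B] by blast
  have cA: "A \<in> opmat n" and cB: "B \<in> opmat n" using A B is_pauli_carrier by auto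
  have "(\<i> ^ j) \<cdot>\<^sub>m A = A * (B * B)" using cA j by (simp add: mult_smult_distrib[of _ "dimq n" "dimq n" _ "dimq n"])
  also have "\<dots> = (A * B) * B" using cA cB by (simp add: assoc_mult_square_mat)
  also have "\<dots> = (\<i> ^ k) \<cdot>\<^sub>m B"
    using cB k by (simp add: mult_smult_assoc_mat[of _ "dimq n" "dimq n" _ "dimq n"])
  finally have "(\<i> ^ (3 * j)) \<cdot>\<^sub>m ((\<i> ^ j) \<cdot>\<^sub>m A) = (\<i> ^ (3 * j + k)) \<cdot>\<^sub>m B"
    by (simp add: smult_smult_mat power_add)
  moreover have "\<i> ^ (3 * j) * \<i> ^ j = (1::complex)"
    by (simp flip: power_add)
  ultimately have "A = (\<i> ^ (3 * j + k)) \<cdot>\<^sub>m B" by (simp add: smult_smult_mat)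
  then show ?thesis unfolding eq_mod_phase_def by blast
qed

lemma is_clifford_carrier:
  "is_clifford n U \<Longrightarrow> U \<in> opmat n \<and> mat_adjoint U \<in> opmat n"
  unfolding is_clifford_def is_unitary_def by (simp add: mat_adjoint_carrier)

lemma is_clifford_inverse:
  "is_clifford n U \<Longrightarrow> U * mat_adjoint U = 1\<^sub>m (dimq n) \<and> mat_adjoint U * U = 1\<^sub>m (dimq n)"
  unfolding is_clifford_def is_unitary_def by simp

lemma is_pauli_conj_clifford: "is_clifford n U \<Longrightarrow> is_pauli n P \<Longrightarrow> is_pauli n (conj_mat U P)"
  unfolding is_clifford_def by blast

lemma is_clifford_one: "is_clifford n (1\<^sub>m (dimq n))"
proof -
  have "is_pauli n (1\<^sub>m (dimq n) * P * 1\<^sub>m (dimq n))" if "is_pauli n P" for P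
    using that is_pauli_carrier[OF that] by (metis left_mult_one_mat right_mult_one_mat)
  then show ?thesis unfolding is_clifford_def is_unitary_def by simp
qed

lemma is_clifford_mult:
  assumes U: "is_clifford n U" and V: "is_clifford n V"
  shows "is_clifford n (U * V)"
proof -
  have cU: "U \<in> opmat n" "mat_adjoint U \<in> opmat n" and cV: "V \<in> opmat n" "mat_adjoint V \<in> opmat n"
    using U V is_clifford_carrier by auto
  have adj: "mat_adjoint (U * V) = mat_adjoint V * mat_adjoint U"
    using cU cV by (simp add: mat_adjoint_mult)
  have "U * V * mat_adjoint (U * V) = conj_mat U (V * mat_adjoint V)"
    unfolding adj using cU cV by (simp add: assoc_mult_square_mat)
  moreover have "mat_adjoint (U * V) * (U * V) = mat_adjoint V * (mat_adjoint U * U) * V"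
    unfolding adj using cU cV by (simp add: assoc_mult_square_mat)
  moreover have "is_pauli n (conj_mat (U * V) P)" if "is_pauli n P" for P
    using conj_mat_mult[OF cU(1) cV(1) is_pauli_carrier[OF that]]
      is_pauli_conj_clifford[OF U is_pauli_conj_clifford[OF V that]] by simp
  ultimately show ?thesis
    using U V cU cV is_clifford_inverse[OF U] is_clifford_inverse[OF V]
    unfolding is_clifford_def is_unitary_def by simp
qed

text \<open>The definition of a Clifford only asks conjugation by U to preserve the Pauli group;
  since conjugation is injective and the Pauli group finite, it permutes the Pauli group,
  so conjugation by the inverse preserves it as well.\<close>
lemma is_pauli_conj_clifford_adjoint:
  assumes U: "is_clifford n U" and P: "is_pauli n P"
  shows "is_pauli n (mat_adjoint U * P * U)"
proof -
  have cU: "U \<in> opmat n" "mat_adjoint U \<in> opmat n" using U is_clifford_carrier by auto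
  have cancel: "mat_adjoint U * conj_mat U Q * U = Q" if "is_pauli n Q" for Q
    using conj_cancel[OF cU is_pauli_carrier[OF that]] is_clifford_inverse[OF U] by simp
  have "conj_mat U ` {P. is_pauli n P} = {P. is_pauli n P}"
  proof (rule endo_inj_surj)
    show "inj_on (conj_mat U) {P. is_pauli n P}"
      by (rule inj_on_inverseI[where g="\<lambda>P. mat_adjoint U * P * U"]) (use cancel in auto)
  qed (use finite_paulis is_pauli_conj_clifford[OF U] in auto)
  then obtain Q where "is_pauli n Q" "P = conj_mat U Q" using P by auto
  then show ?thesis using cancel by simp
qed

lemma comm_sign_conj_clifford:
  assumes "is_clifford n U" "E \<in> opmat n" "A \<in> opmat n"
  shows "comm_sign E (conj_mat U A) = comm_sign (mat_adjoint U * E * U) A"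
  using assms by (intro comm_sign_conj) (auto simp: is_clifford_carrier is_clifford_inverse)

lemma comm_sign_adjoint_conj_clifford:
  assumes "is_clifford n U" "E \<in> opmat n" "A \<in> opmat n"
  shows "comm_sign E (mat_adjoint U * A * U) = comm_sign (conj_mat U E) A"
  using assms by (intro comm_sign_conj) (auto simp: is_clifford_carrier is_clifford_inverse)

lemma comm_sign_conj_conj:
  assumes U: "is_clifford n U" and Y: "Y \<in> opmat n" and A: "A \<in> opmat n"
  shows "comm_sign (conj_mat U Y) (conj_mat U A) = comm_sign Y A"
proof -
  have cU: "U \<in> opmat n" "mat_adjoint U \<in> opmat n" using U is_clifford_carrier by auto
  then have "conj_mat U Y \<in> opmat n" using Y by simp
  then have "comm_sign (conj_mat U Y) (conj_mat U A) = comm_sign (mat_adjoint U * conj_mat U Y * U) A"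
    by (rule comm_sign_conj_clifford[OF U _ A])
  also have "mat_adjoint U * conj_mat U Y * U = Y"
    using conj_cancel[OF cU(1,2) Y] is_clifford_inverse[OF U] by simp
  finally show ?thesis .
qed

lemma comm_sign_conj_commuting:
  assumes U: "is_clifford n U" and Y: "Y \<in> opmat n" and S: "S \<in> opmat n" and US: "U * S = S * U"
  shows "comm_sign (conj_mat U Y) S = comm_sign Y S"
proof -
  have cU: "U \<in> opmat n" "mat_adjoint U \<in> opmat n" using U is_clifford_carrier by auto
  have "mat_adjoint U * S * U = mat_adjoint U * (U * S)" using cU S US by (simp add: assoc_mult_square_mat)
  also have "\<dots> = (mat_adjoint U * U) * S" using cU S by (simp add: assoc_mult_square_mat)
  also have "\<dots> = S" using S is_clifford_inverse[OF U] by (simp add: left_mult_one_mat)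
  finally show ?thesis
    using comm_sign_conj_clifford[OF U S Y] by (simp add: comm_sign_sym)
qed

definition ops_wf :: "nat \<Rightarrow> circuit \<Rightarrow> bool" where
  "ops_wf n C \<longleftrightarrow> (\<forall>x\<in>set C. op_wf n (fst x))"

lemma ops_wf_Cons [simp]: "ops_wf n (a # C) \<longleftrightarrow> op_wf n (fst a) \<and> ops_wf n C"
  unfolding ops_wf_def by simp

lemma op_wf_Meas_carrier: "op_wf n (Meas S) \<Longrightarrow> S \<in> opmat n"
  by (simp add: is_hermitian_pauli_def is_pauli_carrier)

lemma ops_wf_meas_pauli: "ops_wf n C \<Longrightarrow> (Meas S, l) \<in> set C \<Longrightarrow> is_pauli n S"
proof -
  assume "ops_wf n C" "(Meas S, l) \<in> set C"
  then have "op_wf n (fst (Meas S, l))" unfolding ops_wf_def by blast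
  then show ?thesis by (simp add: is_hermitian_pauli_def)
qed

lemma clifford_circuit_ops_wf: "clifford_circuit n C \<Longrightarrow> ops_wf n C"
  unfolding clifford_circuit_def ops_wf_def by auto

lemma clifford_circuit_level_pos: "clifford_circuit n C \<Longrightarrow> x \<in> set C \<Longrightarrow> 1 \<le> snd x"
  unfolding clifford_circuit_def by auto

lemma clifford_circuit_Cons_level_le:
  "clifford_circuit n ((op, l) # C) \<Longrightarrow> x \<in> set C \<Longrightarrow> l \<le> snd x"
  unfolding clifford_circuit_def by auto

lemma clifford_circuit_ConsD:
  assumes "clifford_circuit n (a # C)"
  shows "clifford_circuit n C"
  unfolding clifford_circuit_def
proof (intro conjI allI impI)
  show "\<forall>(op, l)\<in>set C. op_wf n op \<and> 1 \<le> l" and "sorted (map snd C)"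
    using assms unfolding clifford_circuit_def by auto
  have disjoint: "\<forall>i<length (a # C). \<forall>j<length (a # C). i \<noteq> j \<longrightarrow> snd ((a # C) ! i) = snd ((a # C) ! j)
      \<longrightarrow> op_support n (fst ((a # C) ! i)) \<inter> op_support n (fst ((a # C) ! j)) = {}"
    using assms unfolding clifford_circuit_def by blast
  fix i j assume "i < length C" "j < length C" "i \<noteq> j" "snd (C ! i) = snd (C ! j)"
  then show "op_support n (fst (C ! i)) \<inter> op_support n (fst (C ! j)) = {}"
    using disjoint[rule_format, of "Suc i" "Suc j"] by simp
qed

lemma meas_list_in_set:
  "j < length (meas_list C) \<Longrightarrow> (Meas (fst (meas_list C ! j)), snd (meas_list C ! j)) \<in> set C"
  by (induction C arbitrary: j rule: meas_list.induct) (auto simp: nth_Cons split: nat.splits)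

definition meas_pauli :: "circuit \<Rightarrow> nat \<Rightarrow> complex mat" where
  "meas_pauli C j = fst (meas_list C ! j)"

definition meas_level :: "circuit \<Rightarrow> nat \<Rightarrow> nat" where
  "meas_level C j = snd (meas_list C ! j)"

lemma meas_in_circuit: "j < num_meas C \<Longrightarrow> (Meas (meas_pauli C j), meas_level C j) \<in> set C"
  unfolding meas_pauli_def meas_level_def num_meas_def by (rule meas_list_in_set)

lemma meas_level_bounds:
  assumes "clifford_circuit n C" "j < num_meas C"
  shows "1 \<le> meas_level C j" "meas_level C j \<le> depth C"
proof -
  show "1 \<le> meas_level C j"
    using clifford_circuit_level_pos[OF assms(1) meas_in_circuit[OF assms(2)]] by simp
  have "meas_level C j \<in> set (map snd C)"
    unfolding set_map using meas_in_circuit[OF assms(2)] by (rule rev_image_eqI) simp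
  then show "meas_level C j \<le> depth C" unfolding depth_def by simp
qed

lemma is_pauli_meas_pauli:
  assumes "clifford_circuit n C" "j < num_meas C"
  shows "is_pauli n (meas_pauli C j)"
  using ops_wf_meas_pauli[OF clifford_circuit_ops_wf[OF assms(1)] meas_in_circuit[OF assms(2)]] .

lemma gate_commutes_with_meas_same_level:
  assumes C: "clifford_circuit n C"
    and gate: "(Gate Q U, l) \<in> set C" and meas: "(Meas S, l) \<in> set C"
  shows "U * S = S * U"
proof -
  obtain i j where "i < length C" "C ! i = (Gate Q U, l)" "j < length C" "C ! j = (Meas S, l)"
    using gate meas by (auto simp: in_set_conv_nth)
  then have disjoint: "Q \<inter> pauli_support n S = {}"
    using C unfolding clifford_circuit_def by force
  have wf: "op_wf n (Gate Q U)"
    using clifford_circuit_ops_wf[OF C] gate unfolding ops_wf_def by fastforce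
  obtain k x z where S: "S = (\<i> ^ k) \<cdot>\<^sub>m pauli n x z"
    using ops_wf_meas_pauli[OF clifford_circuit_ops_wf[OF C] meas] unfolding is_pauli_def by blast
  have "\<forall>q\<in>Q. \<not> x q \<and> \<not> z q"
    using wf disjoint unfolding S pauli_support_def by auto
  then have "U * pauli n x z = pauli n x z * U"
    using wf unfolding op_wf.simps acts_within_def by blast
  moreover have "U \<in> opmat n" using wf is_clifford_carrier by simp
  ultimately show ?thesis unfolding S
    by (simp add: mult_smult_distrib[of _ "dimq n" "dimq n" _ "dimq n"]
        mult_smult_assoc_mat[of _ "dimq n" "dimq n" _ "dimq n"])
qed

lemma level_unitary_clifford: "ops_wf n C \<Longrightarrow> is_clifford n (level_unitary n C l)"
  by (induction n C l rule: level_unitary.induct) (auto intro: is_clifford_one is_clifford_mult)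

lemma level_unitary_eq_one: "\<forall>x\<in>set C. snd x \<noteq> l \<Longrightarrow> level_unitary n C l = 1\<^sub>m (dimq n)"
  by (induction n C l rule: level_unitary.induct) auto

lemma level_unitary_commute:
  assumes "ops_wf n C" "S \<in> opmat n" "\<And>Q U. (Gate Q U, l) \<in> set C \<Longrightarrow> U * S = S * U"
  shows "level_unitary n C l * S = S * level_unitary n C l"
  using assms
proof (induction n C l rule: level_unitary.induct)
  case (2 n Q U l' C l)
  have IH: "level_unitary n C l * S = S * level_unitary n C l"
    using "2.IH" "2.prems" by (cases "l' = l") auto
  have "level_unitary n C l * U * S = S * (level_unitary n C l * U)" if "l' = l"
  proof (rule commute_mult[OF _ _ \<open>S \<in> opmat n\<close> IH])
    show "level_unitary n C l \<in> opmat n" "U \<in> opmat n"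
      using 2 level_unitary_clifford is_clifford_carrier by auto
    show "U * S = S * U" using "2.prems"(3)[of Q U] that by simp
  qed
  then show ?case using IH by simp
qed auto

fun prefix_unitary :: "nat \<Rightarrow> circuit \<Rightarrow> nat \<Rightarrow> complex mat" where
  "prefix_unitary n C 0 = 1\<^sub>m (dimq n)"
| "prefix_unitary n C (Suc k) = level_unitary n C (Suc k) * prefix_unitary n C k"

lemma prefix_unitary_clifford: "ops_wf n C \<Longrightarrow> is_clifford n (prefix_unitary n C k)"
  by (induction k) (auto intro: is_clifford_one is_clifford_mult level_unitary_clifford)

lemma prefix_unitary_eq_one: "\<forall>x\<in>set C. k < snd x \<Longrightarrow> prefix_unitary n C k = 1\<^sub>m (dimq n)"
proof (induction k)
  case (Suc k)
  then show ?case using level_unitary_eq_one[of C "Suc k" n] by fastforce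
qed simp

lemma prefix_unitary_Cons_meas [simp]: "prefix_unitary n ((Meas S, l) # C) k = prefix_unitary n C k"
  by (induction k) simp_all

lemma prefix_unitary_Cons_gate:
  assumes levels: "\<forall>x\<in>set C. l \<le> snd x" and "1 \<le> l" "l \<le> k"
    and wf: "ops_wf n ((Gate Q U, l) # C)"
  shows "prefix_unitary n ((Gate Q U, l) # C) k = prefix_unitary n C k * U"
  using \<open>l \<le> k\<close>
proof (induction k rule: dec_induct)
  case base
  obtain l0 where l0: "l = Suc l0" using \<open>1 \<le> l\<close> by (cases l) auto
  have "prefix_unitary n ((Gate Q U, l) # C) l0 = 1\<^sub>m (dimq n)" "prefix_unitary n C l0 = 1\<^sub>m (dimq n)"
    using levels l0 by (intro prefix_unitary_eq_one; auto)+
  moreover have "U \<in> opmat n" "level_unitary n C l \<in> opmat n"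
    using wf level_unitary_clifford is_clifford_carrier by auto
  ultimately show ?case unfolding l0 by simp
next
  case (step k)
  have "U \<in> opmat n" "level_unitary n C (Suc k) \<in> opmat n" "prefix_unitary n C k \<in> opmat n"
    using wf level_unitary_clifford prefix_unitary_clifford is_clifford_carrier by auto
  then show ?case using step by (simp add: assoc_mult_square_mat)
qed

lemma prefix_unitary_Suc_conj:
  assumes "ops_wf n C" "X \<in> opmat n"
  shows "conj_mat (prefix_unitary n C (Suc k)) X =
    conj_mat (level_unitary n C (Suc k)) (conj_mat (prefix_unitary n C k) X)"
proof -
  have "level_unitary n C (Suc k) \<in> opmat n" "prefix_unitary n C k \<in> opmat n"
    using assms(1) is_clifford_carrier level_unitary_clifford prefix_unitary_clifford by blast+
  then show ?thesis using conj_mat_mult assms(2) by simp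
qed

section \<open>Pauli errors on the input\<close>

lemma meas_proj_sign:
  assumes "S \<in> opmat n"
  shows "meas_proj n S b = (1 / 2) \<cdot>\<^sub>m (1\<^sub>m (dimq n) + (if b then -1 else 1) \<cdot>\<^sub>m S)"
proof -
  have "- S = (-1) \<cdot>\<^sub>m S" by (rule eq_matI) auto
  then show ?thesis unfolding meas_proj_def by simp
qed

lemma meas_proj_carrier: "S \<in> opmat n \<Longrightarrow> meas_proj n S b \<in> opmat n"
  by (simp add: meas_proj_sign)

lemma meas_proj_mult_pauli:
  assumes E: "is_pauli n E" and S: "is_pauli n S"
  shows "meas_proj n S (b \<noteq> (E * S \<noteq> S * E)) * E = E * meas_proj n S b"
proof -
  have cE: "E \<in> opmat n" and cS: "S \<in> opmat n" using E S is_pauli_carrier by auto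
  define sign :: "bool \<Rightarrow> complex" where "sign c = (if c then -1 else 1)" for c
  have "meas_proj n S c * E = (1 / 2) \<cdot>\<^sub>m (E + sign c \<cdot>\<^sub>m (S * E))" for c
    unfolding meas_proj_sign[OF cS] sign_def using cE cS
    by (simp add: mult_smult_assoc_mat[of _ "dimq n" "dimq n" _ "dimq n"]
        add_mult_distrib_mat[of _ "dimq n" "dimq n"])
  moreover have "E * meas_proj n S b = (1 / 2) \<cdot>\<^sub>m (E + sign b \<cdot>\<^sub>m (E * S))"
  proof -
    have X: "1\<^sub>m (dimq n) + sign b \<cdot>\<^sub>m S \<in> opmat n" using cS by simp
    show ?thesis
      unfolding meas_proj_sign[OF cS] mult_smult_distrib[OF cE X] sign_def[symmetric]
      using cE cS by (simp add: mult_add_distrib_mat[OF cE one_carrier_mat] mult_smult_distrib[OF cE cS]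
          right_mult_one_mat[OF cE])
  qed
  moreover have "sign b \<cdot>\<^sub>m (E * S) = sign (b \<noteq> (E * S \<noteq> S * E)) \<cdot>\<^sub>m (S * E)"
    using comm_sign_swap[OF E S] unfolding comm_sign_def sign_def by (auto simp: smult_smult_mat)
  ultimately show ?thesis by simp
qed

lemma run_carrier:
  "ops_wf n C \<Longrightarrow> v \<in> carrier_vec (dimq n) \<Longrightarrow> run n C os v \<in> carrier_vec (dimq n)"
proof (induction n C os v rule: run.induct)
  case (2 n Q U l C os v)
  then show ?case using mult_mat_vec_carrier[of U "dimq n" "dimq n" v] is_clifford_carrier by simp
next
  case (3 n S l C v)
  then show ?case
    using mult_mat_vec_carrier[OF meas_proj_carrier[OF op_wf_Meas_carrier]] by (simp del: op_wf.simps)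
next
  case (4 n S l C b os v)
  then show ?case
    using mult_mat_vec_carrier[OF meas_proj_carrier[OF op_wf_Meas_carrier]] by (simp del: op_wf.simps)
qed simp

lemma run_smult:
  "ops_wf n C \<Longrightarrow> v \<in> carrier_vec (dimq n) \<Longrightarrow> run n C os (c \<cdot>\<^sub>v v) = c \<cdot>\<^sub>v run n C os v"
proof (induction n C os v rule: run.induct)
  case (2 n Q U l C os v)
  then show ?case
    using mult_mat_vec[of U "dimq n" "dimq n" v c] mult_mat_vec_carrier[of U "dimq n" "dimq n" v]
      is_clifford_carrier by simp
next
  case (3 n S l C v)
  then show ?case
    using mult_mat_vec[OF meas_proj_carrier[OF op_wf_Meas_carrier]]
      mult_mat_vec_carrier[OF meas_proj_carrier[OF op_wf_Meas_carrier]] by (simp del: op_wf.simps)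
next
  case (4 n S l C b os v)
  then show ?case
    using mult_mat_vec[OF meas_proj_carrier[OF op_wf_Meas_carrier]]
      mult_mat_vec_carrier[OF meas_proj_carrier[OF op_wf_Meas_carrier]] by (simp del: op_wf.simps)
qed simp

lemma outcome_code_memI:
  assumes wf: "ops_wf n C" and os: "length os = num_meas C"
    and w: "w \<in> carrier_vec (dimq n)" "w \<noteq> 0\<^sub>v (dimq n)" and run: "run n C os w \<noteq> 0\<^sub>v (dimq n)"
  shows "os \<in> outcome_code n C"
proof -
  obtain c where c: "c \<noteq> 0" "(c \<cdot>\<^sub>v w) \<bullet>c (c \<cdot>\<^sub>v w) = 1" using exists_normalized_multiple[OF w] by blast
  have "run n C os (c \<cdot>\<^sub>v w) = c \<cdot>\<^sub>v run n C os w" using wf w(1) by (rule run_smult)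
  moreover have "run n C os w \<in> carrier_vec (dimq n)" using wf w(1) by (rule run_carrier)
  ultimately have "run n C os (c \<cdot>\<^sub>v w) \<bullet>c run n C os (c \<cdot>\<^sub>v w) \<noteq> 0"
    using run c(1) by (auto simp: conjugate_smult_vec)
  moreover have "c \<cdot>\<^sub>v w \<in> carrier_vec (dimq n)" using w(1) by simp
  ultimately show ?thesis unfolding outcome_code_def using os c(2) by blast
qed

fun error_flips :: "nat \<Rightarrow> circuit \<Rightarrow> complex mat \<Rightarrow> bool list" where
  "error_flips n [] E = []"
| "error_flips n ((Gate Q U, l) # C) E = error_flips n C (conj_mat U E)"
| "error_flips n ((Meas S, l) # C) E = (E * S \<noteq> S * E) # error_flips n C E"

fun error_out :: "nat \<Rightarrow> circuit \<Rightarrow> complex mat \<Rightarrow> complex mat" where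
  "error_out n [] E = E"
| "error_out n ((Gate Q U, l) # C) E = error_out n C (conj_mat U E)"
| "error_out n ((Meas S, l) # C) E = error_out n C E"

lemma length_error_flips: "length (error_flips n C E) = num_meas C"
  unfolding num_meas_def by (induction n C E rule: error_flips.induct) auto

lemma is_pauli_error_out: "ops_wf n C \<Longrightarrow> is_pauli n E \<Longrightarrow> is_pauli n (error_out n C E)"
  by (induction n C E rule: error_out.induct) (auto intro: is_pauli_conj_clifford)

lemma run_error:
  assumes "ops_wf n C" "is_pauli n E" "v \<in> carrier_vec (dimq n)" "length os = num_meas C"
  shows "run n C (bxor os (error_flips n C E)) (E *\<^sub>v v) = error_out n C E *\<^sub>v run n C os v"
  using assms
proof (induction n C E arbitrary: os v rule: error_flips.induct)
  case (2 n Q U l C E)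
  have U: "is_clifford n U" using "2.prems"(1) by simp
  have cU: "U \<in> opmat n" "mat_adjoint U \<in> opmat n" and cE: "E \<in> opmat n"
    using U "2.prems"(2) is_clifford_carrier is_pauli_carrier by auto
  have "conj_mat U E * U = U * E * (mat_adjoint U * U)"
    using cU cE by (simp add: assoc_mult_square_mat)
  also have "\<dots> = U * E" using is_clifford_inverse[OF U] cU cE by (simp add: right_mult_one_mat)
  finally have "conj_mat U E *\<^sub>v (U *\<^sub>v v) = U *\<^sub>v (E *\<^sub>v v)"
    using cU cE "2.prems"(3) by (intro mult_mat_vec_eq_if_mult_eq) auto
  moreover have "run n C (bxor os (error_flips n C (conj_mat U E))) (conj_mat U E *\<^sub>v (U *\<^sub>v v))
      = error_out n C (conj_mat U E) *\<^sub>v run n C os (U *\<^sub>v v)"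
    using "2.prems" U cU by (intro "2.IH") (auto simp: is_pauli_conj_clifford num_meas_def)
  ultimately show ?case by simp
next
  case (3 n S l C E)
  obtain b os' where os: "os = b # os'" using "3.prems"(4) by (cases os) (auto simp: num_meas_def)
  have S: "is_pauli n S" using "3.prems"(1) by (simp add: is_hermitian_pauli_def)
  have "meas_proj n S (b \<noteq> (E * S \<noteq> S * E)) *\<^sub>v (E *\<^sub>v v) = E *\<^sub>v (meas_proj n S b *\<^sub>v v)"
    using meas_proj_mult_pauli[OF "3.prems"(2) S, of b] "3.prems"(2,3) S
    by (intro mult_mat_vec_eq_if_mult_eq) (auto simp: meas_proj_carrier is_pauli_carrier)
  moreover have "run n C (bxor os' (error_flips n C E)) (E *\<^sub>v (meas_proj n S b *\<^sub>v v))
      = error_out n C E *\<^sub>v run n C os' (meas_proj n S b *\<^sub>v v)"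
    using "3.prems" os mult_mat_vec_carrier[OF meas_proj_carrier[OF is_pauli_carrier[OF S]]]
    by (intro "3.IH") (auto simp: num_meas_def)
  ultimately show ?case using os by simp
qed (simp add: bxor_def)

lemma error_flips_in_outcome_code:
  assumes wf: "ops_wf n C" and zero: "replicate (num_meas C) False \<in> outcome_code n C"
    and X: "is_pauli n X"
  shows "error_flips n C X \<in> outcome_code n C"
proof -
  let ?zero = "replicate (num_meas C) False"
  obtain \<psi> where \<psi>: "\<psi> \<in> carrier_vec (dimq n)" "\<psi> \<bullet>c \<psi> = 1"
    and nz: "run n C ?zero \<psi> \<bullet>c run n C ?zero \<psi> \<noteq> 0"
    using zero unfolding outcome_code_def by blast
  have r: "run n C ?zero \<psi> \<in> carrier_vec (dimq n)" "run n C ?zero \<psi> \<noteq> 0\<^sub>v (dimq n)"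
    using run_carrier[OF wf \<psi>(1)] nz by auto
  have "\<psi> \<noteq> 0\<^sub>v (dimq n)" using \<psi> by auto
  then have w: "X *\<^sub>v \<psi> \<in> carrier_vec (dimq n)" "X *\<^sub>v \<psi> \<noteq> 0\<^sub>v (dimq n)"
    using is_pauli_carrier[OF X] \<psi>(1) pauli_mult_vec_nonzero[OF X \<psi>(1)] by auto
  have "bxor ?zero (error_flips n C X) = error_flips n C X"
    using bxor_replicate_False[of "error_flips n C X"] by (simp add: length_error_flips)
  then have "run n C (error_flips n C X) (X *\<^sub>v \<psi>) = error_out n C X *\<^sub>v run n C ?zero \<psi>"
    using run_error[OF wf X \<psi>(1), of ?zero] by simp
  then have "run n C (error_flips n C X) (X *\<^sub>v \<psi>) \<noteq> 0\<^sub>v (dimq n)"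
    using pauli_mult_vec_nonzero[OF is_pauli_error_out[OF wf X] r] by simp
  then show ?thesis using outcome_code_memI[OF wf length_error_flips w] by blast
qed

lemma comm_sign_prefix_Cons_gate:
  assumes C: "clifford_circuit n ((Gate Q U, l) # C)" and E: "is_pauli n E"
    and meas: "(Meas S, lv) \<in> set C"
  shows "comm_sign (conj_mat (prefix_unitary n ((Gate Q U, l) # C) (lv - 1)) E) S =
    comm_sign (conj_mat (prefix_unitary n C (lv - 1)) (conj_mat U E)) S"
proof -
  have wf: "ops_wf n ((Gate Q U, l) # C)" using C by (rule clifford_circuit_ops_wf)
  have U: "is_clifford n U" using wf by simp
  have levels: "\<forall>x\<in>set C. l \<le> snd x" using clifford_circuit_Cons_level_le[OF C] by blast
  have l: "1 \<le> l" using clifford_circuit_level_pos[OF C, of "(Gate Q U, l)"] by simp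
  have cE: "E \<in> opmat n" using E by (rule is_pauli_carrier)
  have cU: "U \<in> opmat n" using U is_clifford_carrier by blast
  show ?thesis
  proof (cases "l \<le> lv - 1")
    case True
    have cW: "prefix_unitary n C (lv - 1) \<in> opmat n"
      using prefix_unitary_clifford[of n C] wf is_clifford_carrier by auto
    show ?thesis
      unfolding prefix_unitary_Cons_gate[OF levels l True wf] conj_mat_mult[OF cW cU cE] ..
  next
    case False
    moreover have "l \<le> lv" using levels meas by fastforce
    ultimately have "lv = l" by arith
    then have "\<forall>x\<in>set ((Gate Q U, l) # C). lv - 1 < snd x" using levels l by auto
    then have "prefix_unitary n ((Gate Q U, l) # C) (lv - 1) = 1\<^sub>m (dimq n)"
      "prefix_unitary n C (lv - 1) = 1\<^sub>m (dimq n)"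
      by (simp_all add: prefix_unitary_eq_one)
    moreover have "U * S = S * U"
      using gate_commutes_with_meas_same_level[OF C, of Q U l S] meas \<open>lv = l\<close> by simp
    moreover have "S \<in> opmat n"
      using ops_wf_meas_pauli[OF _ meas] wf is_pauli_carrier by simp
    ultimately show ?thesis
      using comm_sign_conj_commuting[OF U cE] cE is_pauli_carrier[OF is_pauli_conj_clifford[OF U E]]
      by (simp add: left_mult_one_mat right_mult_one_mat)
  qed
qed

lemma error_flips_nth:
  assumes "clifford_circuit n C" "is_pauli n E" "j < num_meas C"
  shows "error_flips n C E ! j \<longleftrightarrow>
    comm_sign (conj_mat (prefix_unitary n C (meas_level C j - 1)) E) (meas_pauli C j) = -1"
  using assms
proof (induction n C E arbitrary: j rule: error_flips.induct)
  case (2 n Q U l C E)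
  have C: "clifford_circuit n C" using "2.prems"(1) by (rule clifford_circuit_ConsD)
  have U: "is_clifford n U" using clifford_circuit_ops_wf[OF "2.prems"(1)] by simp
  have j: "j < num_meas C" using "2.prems"(3) by (simp add: num_meas_def)
  show ?case
    using "2.IH"[OF C is_pauli_conj_clifford[OF U "2.prems"(2)] j]
      comm_sign_prefix_Cons_gate[OF "2.prems"(1,2) meas_in_circuit[OF j]]
    by (simp add: meas_level_def meas_pauli_def)
next
  case (3 n S l C E)
  show ?case
  proof (cases j)
    case 0
    have "prefix_unitary n C (l - 1) = 1\<^sub>m (dimq n)"
      using clifford_circuit_Cons_level_le[OF "3.prems"(1)] clifford_circuit_level_pos[OF "3.prems"(1)]
      by (intro prefix_unitary_eq_one) fastforce
    then show ?thesis
      using 0 is_pauli_carrier[OF "3.prems"(2)] by (simp add: meas_level_def meas_pauli_def comm_sign_def)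
  next
    case (Suc j')
    then show ?thesis
      using "3.IH"[OF clifford_circuit_ConsD[OF "3.prems"(1)] "3.prems"(2), of j'] "3.prems"(3)
      by (simp add: meas_level_def meas_pauli_def num_meas_def)
  qed
qed (simp add: num_meas_def)

section \<open>Commutation signs of cumulants\<close>

declare back_cumulant.simps [simp del]

lemma is_pauli_cumulant:
  assumes "ops_wf n C" "\<And>k. is_pauli n (F k)"
  shows "is_pauli n (cumulant n C F l)"
  by (induction l) (auto intro: is_pauli_mult is_pauli_conj_clifford level_unitary_clifford assms)

lemma is_pauli_back_cumulant:
  assumes "ops_wf n C" "\<And>k. is_pauli n (F k)"
  shows "is_pauli n (back_cumulant n C F l)"
  using assms
proof (induction n C F l rule: back_cumulant.induct)
  case (1 n C F l)
  then show ?case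
    by (subst back_cumulant.simps)
      (auto intro: is_pauli_mult is_pauli_conj_clifford_adjoint level_unitary_clifford)
qed

lemma comm_sign_cumulant:
  assumes wf: "ops_wf n C" and X: "is_pauli n X" and F: "\<And>k. is_pauli n (F k)"
  shows "comm_sign (conj_mat (prefix_unitary n C l) X) (cumulant n C F l) =
    (\<Prod>k\<le>l. comm_sign (conj_mat (prefix_unitary n C k) X) (F k))"
proof (induction l)
  case (Suc l)
  let ?U = "level_unitary n C (Suc l)"
  let ?Y = "conj_mat (prefix_unitary n C l) X"
  have U: "is_clifford n ?U" using wf by (rule level_unitary_clifford)
  have Y: "is_pauli n ?Y" using prefix_unitary_clifford[OF wf] X by (rule is_pauli_conj_clifford)
  have cum: "is_pauli n (cumulant n C F l)" using wf F by (rule is_pauli_cumulant)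
  have "comm_sign (conj_mat ?U ?Y) (cumulant n C F (Suc l)) =
      comm_sign (conj_mat ?U ?Y) (F (Suc l)) * comm_sign (conj_mat ?U ?Y) (conj_mat ?U (cumulant n C F l))"
    using comm_sign_mult[OF is_pauli_conj_clifford[OF U Y] F is_pauli_conj_clifford[OF U cum]] by simp
  also have "comm_sign (conj_mat ?U ?Y) (conj_mat ?U (cumulant n C F l)) = comm_sign ?Y (cumulant n C F l)"
    using comm_sign_conj_conj[OF U] is_pauli_carrier Y cum by simp
  finally show ?case
    using Suc.IH prefix_unitary_Suc_conj[OF wf is_pauli_carrier[OF X]] by (simp add: mult.commute)
qed simp

lemma comm_sign_back_cumulant:
  assumes wf: "ops_wf n C" and X: "is_pauli n X" and F: "\<And>k. is_pauli n (F k)"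
    and "l \<le> depth C"
  shows "comm_sign (conj_mat (prefix_unitary n C l) X) (back_cumulant n C F l) =
    (\<Prod>k = l..depth C. comm_sign (conj_mat (prefix_unitary n C k) X) (F k))"
  using \<open>l \<le> depth C\<close>
proof (induction l rule: inc_induct)
  case base
  then show ?case by (simp add: back_cumulant.simps)
next
  case (step l)
  let ?U = "level_unitary n C (Suc l)"
  let ?Y = "conj_mat (prefix_unitary n C l) X"
  let ?B = "back_cumulant n C F (Suc l)"
  have U: "is_clifford n ?U" using wf by (rule level_unitary_clifford)
  have Y: "is_pauli n ?Y" using prefix_unitary_clifford[OF wf] X by (rule is_pauli_conj_clifford)
  have B: "is_pauli n ?B" using wf F by (rule is_pauli_back_cumulant)
  have "back_cumulant n C F l = F l * (mat_adjoint ?U * ?B * ?U)"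
    using step.hyps(2) by (subst back_cumulant.simps) simp
  then have "comm_sign ?Y (back_cumulant n C F l) = comm_sign ?Y (F l) * comm_sign (conj_mat ?U ?Y) ?B"
    using comm_sign_mult[OF Y F is_pauli_conj_clifford_adjoint[OF U B]]
      comm_sign_adjoint_conj_clifford[OF U] is_pauli_carrier Y B by simp
  then show ?case
    using step.IH step.hyps prefix_unitary_Suc_conj[OF wf is_pauli_carrier[OF X]]
    by (simp add: prod.atLeast_Suc_atMost)
qed

definition meas_factor :: "nat \<Rightarrow> circuit \<Rightarrow> bool list \<Rightarrow> nat \<Rightarrow> complex mat" where
  "meas_factor n C u j = (if u ! j then meas_pauli C j else 1\<^sub>m (dimq n))"

definition meas_sign :: "nat \<Rightarrow> circuit \<Rightarrow> bool list \<Rightarrow> complex mat \<Rightarrow> nat \<Rightarrow> int" where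
  "meas_sign n C u X j =
     comm_sign (conj_mat (prefix_unitary n C (meas_level C j - 1)) X) (meas_factor n C u j)"

lemma fault_after_eq:
  "fault_after n C u l = mprod n (map (meas_factor n C u) (filter (\<lambda>j. meas_level C j = l) [0..<num_meas C]))"
  unfolding fault_after_def Let_def listcomp_eq_map_filter meas_factor_def meas_pauli_def
    meas_level_def num_meas_def ..

lemma fault_before_eq:
  "fault_before n C u l =
     mprod n (map (meas_factor n C u) (filter (\<lambda>j. meas_level C j = Suc l) [0..<num_meas C]))"
  unfolding fault_before_def Let_def listcomp_eq_map_filter meas_factor_def meas_pauli_def
    meas_level_def num_meas_def ..

lemma is_pauli_meas_factor: "clifford_circuit n C \<Longrightarrow> j < num_meas C \<Longrightarrow> is_pauli n (meas_factor n C u j)"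
  unfolding meas_factor_def by (simp add: is_pauli_meas_pauli is_pauli_one)

lemma comm_sign_meas_factors:
  assumes C: "clifford_circuit n C" and E: "is_pauli n E"
  shows "comm_sign E (mprod n (map (meas_factor n C u) (filter P [0..<num_meas C]))) =
    (\<Prod>j | j < num_meas C \<and> P j. comm_sign E (meas_factor n C u j))"
    and "is_pauli n (mprod n (map (meas_factor n C u) (filter P [0..<num_meas C])))"
proof -
  have factors: "\<forall>A\<in>set (map (meas_factor n C u) (filter P [0..<num_meas C])). is_pauli n A"
    using is_pauli_meas_factor[OF C] by auto
  then show "is_pauli n (mprod n (map (meas_factor n C u) (filter P [0..<num_meas C])))"
    by (rule is_pauli_mprod)
  have "prod_list (map (\<lambda>j. comm_sign E (meas_factor n C u j)) (filter P [0..<num_meas C])) =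
      (\<Prod>j \<in> set (filter P [0..<num_meas C]). comm_sign E (meas_factor n C u j))"
    by (rule prod.distinct_set_conv_list[symmetric]) simp
  also have "set (filter P [0..<num_meas C]) = {j. j < num_meas C \<and> P j}" by auto
  finally show "comm_sign E (mprod n (map (meas_factor n C u) (filter P [0..<num_meas C]))) =
      (\<Prod>j | j < num_meas C \<and> P j. comm_sign E (meas_factor n C u j))"
    using comm_sign_mprod[OF E factors] by (simp add: comp_def)
qed

lemma is_pauli_fault_before: "clifford_circuit n C \<Longrightarrow> is_pauli n (fault_before n C u k)"
  unfolding fault_before_eq by (rule comm_sign_meas_factors(2)[OF _ is_pauli_one])

lemma is_pauli_fault_after: "clifford_circuit n C \<Longrightarrow> is_pauli n (fault_after n C u k)"
  unfolding fault_after_eq by (rule comm_sign_meas_factors(2)[OF _ is_pauli_one])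

lemma level_unitary_commute_meas_factor:
  assumes C: "clifford_circuit n C" and j: "j < num_meas C"
  shows "level_unitary n C (meas_level C j) * meas_factor n C u j =
    meas_factor n C u j * level_unitary n C (meas_level C j)"
proof -
  have wf: "ops_wf n C" using C by (rule clifford_circuit_ops_wf)
  have "level_unitary n C (meas_level C j) * meas_pauli C j = meas_pauli C j * level_unitary n C (meas_level C j)"
    using gate_commutes_with_meas_same_level[OF C _ meas_in_circuit[OF j]]
      is_pauli_carrier[OF is_pauli_meas_pauli[OF C j]]
    by (intro level_unitary_commute[OF wf])
  moreover have "level_unitary n C (meas_level C j) \<in> opmat n"
    using level_unitary_clifford[OF wf] is_clifford_carrier by blast
  ultimately show ?thesis
    unfolding meas_factor_def by (simp add: left_mult_one_mat right_mult_one_mat)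
qed

lemma comm_sign_fault_before:
  assumes C: "clifford_circuit n C" and X: "is_pauli n X"
  shows "comm_sign (conj_mat (prefix_unitary n C k) X) (fault_before n C u k) =
    (\<Prod>j | j < num_meas C \<and> meas_level C j = Suc k. meas_sign n C u X j)"
  unfolding fault_before_eq meas_sign_def
  using comm_sign_meas_factors(1)[OF C is_pauli_conj_clifford[OF prefix_unitary_clifford X]]
    clifford_circuit_ops_wf[OF C] by simp

text \<open>A measurement at level k commutes with the gates of level k, so it does not matter
  whether the error is carried to just before or just after these gates.\<close>
lemma comm_sign_fault_after:
  assumes C: "clifford_circuit n C" and X: "is_pauli n X"
  shows "comm_sign (conj_mat (prefix_unitary n C k) X) (fault_after n C u k) =
    (\<Prod>j | j < num_meas C \<and> meas_level C j = k. meas_sign n C u X j)"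
proof -
  have wf: "ops_wf n C" using C by (rule clifford_circuit_ops_wf)
  have Y: "is_pauli n (conj_mat (prefix_unitary n C k') X)" for k'
    using prefix_unitary_clifford[OF wf] X by (rule is_pauli_conj_clifford)
  have "comm_sign (conj_mat (prefix_unitary n C k) X) (meas_factor n C u j) = meas_sign n C u X j"
    if j: "j < num_meas C" "meas_level C j = k" for j
  proof -
    obtain k' where k: "k = Suc k'" using meas_level_bounds(1)[OF C j(1)] j(2) by (cases k) auto
    have "comm_sign (conj_mat (level_unitary n C k) (conj_mat (prefix_unitary n C k') X)) (meas_factor n C u j)
        = comm_sign (conj_mat (prefix_unitary n C k') X) (meas_factor n C u j)"
      using comm_sign_conj_commuting[OF level_unitary_clifford[OF wf] is_pauli_carrier[OF Y]
          is_pauli_carrier[OF is_pauli_meas_factor[OF C j(1)]]]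
        level_unitary_commute_meas_factor[OF C j(1)] j(2) by simp
    then show ?thesis
      unfolding meas_sign_def k using j(2) k prefix_unitary_Suc_conj[OF wf is_pauli_carrier[OF X]] by simp
  qed
  then show ?thesis
    unfolding fault_after_eq comm_sign_meas_factors(1)[OF C Y] by (intro prod.cong) auto
qed

lemma comm_sign_back_cumulant_mult_cumulant:
  assumes C: "clifford_circuit n C" and X: "is_pauli n X" and l: "l \<le> depth C"
  shows "comm_sign (conj_mat (prefix_unitary n C l) X) (back_cumulant n C (fault_before n C u) l) *
      comm_sign (conj_mat (prefix_unitary n C l) X) (cumulant n C (fault_after n C u) l) =
    (\<Prod>j<num_meas C. meas_sign n C u X j)"
proof -
  let ?m = "num_meas C" and ?h = "meas_sign n C u X" and ?Y = "conj_mat (prefix_unitary n C l) X"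
  have wf: "ops_wf n C" using C by (rule clifford_circuit_ops_wf)
  have "comm_sign ?Y (back_cumulant n C (fault_before n C u) l) =
      (\<Prod>k = l..depth C. \<Prod>j | j < ?m \<and> meas_level C j = Suc k. ?h j)"
    using comm_sign_back_cumulant[OF wf X is_pauli_fault_before[OF C] l] comm_sign_fault_before[OF C X] by simp
  also have "\<dots> = (\<Prod>k = Suc l..Suc (depth C). \<Prod>j | j < ?m \<and> meas_level C j = k. ?h j)"
    by (rule prod.shift_bounds_cl_Suc_ivl[symmetric])
  also have "\<dots> = (\<Prod>j | j < ?m \<and> meas_level C j \<in> {Suc l..Suc (depth C)}. ?h j)"
    by (rule prod_group_levels) simp
  finally have back_sign: "comm_sign ?Y (back_cumulant n C (fault_before n C u) l) =
      (\<Prod>j | j < ?m \<and> meas_level C j \<in> {Suc l..Suc (depth C)}. ?h j)" .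
  have "comm_sign ?Y (cumulant n C (fault_after n C u) l) =
      (\<Prod>k\<le>l. \<Prod>j | j < ?m \<and> meas_level C j = k. ?h j)"
    using comm_sign_cumulant[OF wf X is_pauli_fault_after[OF C]] comm_sign_fault_after[OF C X] by simp
  also have "\<dots> = (\<Prod>j | j < ?m \<and> meas_level C j \<in> {..l}. ?h j)"
    by (rule prod_group_levels) simp
  finally have cum_sign: "comm_sign ?Y (cumulant n C (fault_after n C u) l) =
      (\<Prod>j | j < ?m \<and> meas_level C j \<in> {..l}. ?h j)" .
  let ?A = "{j. j < ?m \<and> meas_level C j \<in> {Suc l..Suc (depth C)}}"
  let ?B = "{j. j < ?m \<and> meas_level C j \<in> {..l}}"
  have "{..<?m} = ?A \<union> ?B"
    using meas_level_bounds(2)[OF C] by fastforce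
  moreover have "prod ?h (?A \<union> ?B) = prod ?h ?A * prod ?h ?B"
    by (rule prod.union_disjoint) auto
  ultimately show ?thesis unfolding back_sign cum_sign by simp
qed

lemma meas_sign_eq:
  assumes C: "clifford_circuit n C" and X: "is_pauli n X" and j: "j < num_meas C"
  shows "meas_sign n C u X j = (if u ! j \<and> error_flips n C X ! j then -1 else 1)"
proof -
  let ?Y = "conj_mat (prefix_unitary n C (meas_level C j - 1)) X"
  have Y: "is_pauli n ?Y"
    using prefix_unitary_clifford[OF clifford_circuit_ops_wf[OF C]] X by (rule is_pauli_conj_clifford)
  show ?thesis
    using error_flips_nth[OF C X j] comm_sign_cases[of ?Y "meas_pauli C j"]
      comm_sign_one[OF is_pauli_carrier[OF Y]]
    unfolding meas_sign_def meas_factor_def by auto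
qed

text \<open>The signs multiply to the parity of the inner product of u with the outcome flips
  caused by X, which is an outcome codeword.\<close>
lemma prod_meas_sign_dual_eq_one:
  assumes C: "clifford_circuit n C" and code: "linear_code (num_meas C) (outcome_code n C)"
    and u: "u \<in> dual_code (num_meas C) (outcome_code n C)" and X: "is_pauli n X"
  shows "(\<Prod>j<num_meas C. meas_sign n C u X j) = 1"
proof -
  let ?f = "error_flips n C X"
  have "?f \<in> outcome_code n C"
    using code clifford_circuit_ops_wf[OF C] X error_flips_in_outcome_code
    unfolding linear_code_def by blast
  then have "\<not> bdot u ?f" and "length u = num_meas C" using u unfolding dual_code_def by auto
  then have "even (card {j \<in> {..<num_meas C}. u ! j \<and> ?f ! j})"
    unfolding bdot_def length_error_flips by (simp add: conj_commute)
  moreover have "(\<Prod>j<num_meas C. meas_sign n C u X j) = (\<Prod>j<num_meas C. if u ! j \<and> ?f ! j then -1 else 1)"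
    using meas_sign_eq[OF C X] by simp
  ultimately show ?thesis by (simp add: prod_if_neg_one)
qed

lemma comm_sign_back_cumulant_eq_cumulant:
  assumes C: "clifford_circuit n C" and code: "linear_code (num_meas C) (outcome_code n C)"
    and u: "u \<in> dual_code (num_meas C) (outcome_code n C)"
    and E: "is_pauli n E" and l: "l \<le> depth C"
  shows "comm_sign E (back_cumulant n C (fault_before n C u) l) =
    comm_sign E (cumulant n C (fault_after n C u) l)"
proof -
  let ?W = "prefix_unitary n C l"
  have W: "is_clifford n ?W" using clifford_circuit_ops_wf[OF C] by (rule prefix_unitary_clifford)
  have X: "is_pauli n (mat_adjoint ?W * E * ?W)" using W E by (rule is_pauli_conj_clifford_adjoint)
  have "conj_mat ?W (mat_adjoint ?W * E * ?W) = E"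
    using conj_cancel[of "mat_adjoint ?W" "dimq n" ?W E] W E is_clifford_carrier is_clifford_inverse
      is_pauli_carrier by auto
  then have "comm_sign E (back_cumulant n C (fault_before n C u) l) *
      comm_sign E (cumulant n C (fault_after n C u) l) = 1"
    using comm_sign_back_cumulant_mult_cumulant[OF C X l, of u]
      prod_meas_sign_dual_eq_one[OF C code u X] by simp
  then show ?thesis
    using comm_sign_cases[of E "back_cumulant n C (fault_before n C u) l"]
      comm_sign_cases[of E "cumulant n C (fault_after n C u) l"] by auto
qed

theorem mainTheorem16:
  fixes n :: nat and C :: circuit and u :: "bool list"
  assumes "clifford_circuit n C"
    and "linear_code (num_meas C) (outcome_code n C)"
    and "u \<in> dual_code (num_meas C) (outcome_code n C)"
  shows "\<forall>l \<le> depth C. eq_mod_phase (back_cumulant n C (fault_before n C u) l)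
                                    (cumulant n C (fault_after n C u) l)"
proof (intro allI impI)
  fix l assume "l \<le> depth C"
  have wf: "ops_wf n C" using assms(1) by (rule clifford_circuit_ops_wf)
  show "eq_mod_phase (back_cumulant n C (fault_before n C u) l) (cumulant n C (fault_after n C u) l)"
  proof (rule eq_mod_phase_if_comm_signs_eq)
    show "is_pauli n (back_cumulant n C (fault_before n C u) l)"
      using wf is_pauli_fault_before[OF assms(1)] by (rule is_pauli_back_cumulant)
    show "is_pauli n (cumulant n C (fault_after n C u) l)"
      using wf is_pauli_fault_after[OF assms(1)] by (rule is_pauli_cumulant)
  qed (rule comm_sign_back_cumulant_eq_cumulant[OF assms _ \<open>l \<le> depth C\<close>])
qed

end
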